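(* Let $0\le p,q<1$, $\theta\in(0,1)$ irrational, and $N\ge2$ an integer. Let $\mathcal O(S^3_{pq\theta})$ be the universal complex unital $*$-algebra generated by $a,b$ subject to $ab=e^{2\pi i\theta}ba$, $ab^*=e^{-2\pi i\theta}b^*a$, $a^*a-paa^*=1-p$, $b^*b-qbb^*=1-q$, $(1-aa^* )(1-bb^* )=0$. Let $\mathcal O(\mathbb Z/N\mathbb Z)$ be the Hopf $*$-algebra generated by a group-like unitary $\tilde u$ with $\tilde u^N=1$, and equip $\mathcal O(S^3_{pq\theta})$ with the right $\mathcal O(\mathbb Z/N\mathbb Z)$-comodule algebra structure given by the $*$-algebra map $\Delta_P$ with $\Delta_P(a)=a\otimes\tilde u$, $\Delta_P(b)=b\otimes\tilde u$. Then $\mathcal O(S^3_{pq\theta})$ is a non-cleft $\mathcal O(\mathbb Z/N\mathbb Z)$-comodule algebra.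
   Context: A right $H$-comodule algebra $P$ (with coaction $\Delta_P$) is cleft if there exists a unital right $H$-colinear linear map $j:H\to P$ that is invertible with respect to the convolution product $(f*g)(h)=f(h_{(1)})g(h_{(2)})$. *)

theory Defs
  imports Complex_Main
begin

text \<open>Letters: a, a*, b, b*.  Elements of the free *-algebra are finitely supported
  coefficient functions on words (the words form a basis).\<close>

datatype gen = GA | GAs | GB | GBs

type_synonym fa = "gen list \<Rightarrow> complex"

definition fin :: "fa \<Rightarrow> bool" where
  "fin f \<longleftrightarrow> finite {w. f w \<noteq> 0}"

definition fa_zero :: fa where "fa_zero = (\<lambda>w. 0)"
definition fa_one :: fa where "fa_one = (\<lambda>w. if w = [] then 1 else 0)"
definition fa_gen :: "gen \<Rightarrow> fa" where "fa_gen x = (\<lambda>w. if w = [x] then 1 else 0)"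
definition fa_add :: "fa \<Rightarrow> fa \<Rightarrow> fa" where "fa_add f g = (\<lambda>w. f w + g w)"
definition fa_smult :: "complex \<Rightarrow> fa \<Rightarrow> fa" where "fa_smult c f = (\<lambda>w. c * f w)"
definition fa_diff :: "fa \<Rightarrow> fa \<Rightarrow> fa" where "fa_diff f g = (\<lambda>w. f w - g w)"

definition fa_mult :: "fa \<Rightarrow> fa \<Rightarrow> fa" where
  "fa_mult f g = (\<lambda>w. \<Sum>i\<le>length w. f (take i w) * g (drop i w))"

fun star_gen :: "gen \<Rightarrow> gen" where
  "star_gen GA = GAs" | "star_gen GAs = GA" | "star_gen GB = GBs" | "star_gen GBs = GB"

definition fa_star :: "fa \<Rightarrow> fa" where
  "fa_star f = (\<lambda>w. cnj (f (rev (map star_gen w))))"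

inductive_set star_ideal :: "fa set \<Rightarrow> fa set" for R where
  zero: "fa_zero \<in> star_ideal R"
| gen: "r \<in> R \<Longrightarrow> fin x \<Longrightarrow> fin y \<Longrightarrow> fa_mult (fa_mult x r) y \<in> star_ideal R"
| add: "f \<in> star_ideal R \<Longrightarrow> g \<in> star_ideal R \<Longrightarrow> fa_add f g \<in> star_ideal R"
| smult: "f \<in> star_ideal R \<Longrightarrow> fa_smult c f \<in> star_ideal R"
| star: "f \<in> star_ideal R \<Longrightarrow> fa_star f \<in> star_ideal R"

definition qeq :: "fa set \<Rightarrow> fa \<Rightarrow> fa \<Rightarrow> bool" where
  "qeq I f g \<longleftrightarrow> fa_diff f g \<in> I"

definition rels :: "real \<Rightarrow> real \<Rightarrow> real \<Rightarrow> fa set" where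
  "rels p q \<theta> =
    (let a = fa_gen GA; as = fa_gen GAs; b = fa_gen GB; bs = fa_gen GBs;
         z = cis (2 * pi * \<theta>) in
     { fa_diff (fa_mult a b) (fa_smult z (fa_mult b a)),
       fa_diff (fa_mult a bs) (fa_smult (cnj z) (fa_mult bs a)),
       fa_diff (fa_diff (fa_mult as a) (fa_smult (complex_of_real p) (fa_mult a as)))
               (fa_smult (complex_of_real (1 - p)) fa_one),
       fa_diff (fa_diff (fa_mult bs b) (fa_smult (complex_of_real q) (fa_mult b bs)))
               (fa_smult (complex_of_real (1 - q)) fa_one),
       fa_mult (fa_diff fa_one (fa_mult a as)) (fa_diff fa_one (fa_mult b bs)) })"

definition S3_ideal :: "real \<Rightarrow> real \<Rightarrow> real \<Rightarrow> fa set" where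
  "S3_ideal p q \<theta> = star_ideal (rels p q \<theta>)"

text \<open>O(Z/NZ) has basis u^0,...,u^(N-1); an element h is given by its coefficients
  h k (k < N).  Coproduct u^k \<mapsto> u^k \<otimes> u^k, counit u^k \<mapsto> 1.
  An element of H \<otimes> H is given by coefficients on u^i \<otimes> u^j.\<close>

definition H_coprod :: "(nat \<Rightarrow> complex) \<Rightarrow> nat \<Rightarrow> nat \<Rightarrow> complex" where
  "H_coprod h i j = (if i = j then h i else 0)"

definition H_counit :: "nat \<Rightarrow> (nat \<Rightarrow> complex) \<Rightarrow> complex" where
  "H_counit N h = (\<Sum>k<N. h k)"

fun deg_gen :: "gen \<Rightarrow> int" where
  "deg_gen GA = 1" | "deg_gen GAs = -1" | "deg_gen GB = 1" | "deg_gen GBs = -1"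

definition wdeg :: "gen list \<Rightarrow> int" where
  "wdeg w = sum_list (map deg_gen w)"

text \<open>The coaction: the *-algebra map with a \<mapsto> a \<otimes> u, b \<mapsto> b \<otimes> u
  (hence a* \<mapsto> a* \<otimes> u^(-1), b* \<mapsto> b* \<otimes> u^(-1)), i.e. a word w \<mapsto> w \<otimes> u^(deg w mod N).
  An element of P \<otimes> H is represented by its components k \<mapsto> (P-coefficient of u^k).\<close>
definition coact :: "nat \<Rightarrow> fa \<Rightarrow> nat \<Rightarrow> fa" where
  "coact N f k = (\<lambda>w. if wdeg w mod int N = int k then f w else 0)"

text \<open>Linear maps H \<rightarrow> P are given by their values on the basis u^k (representatives in F).\<close>
definition lin_ext :: "nat \<Rightarrow> (nat \<Rightarrow> fa) \<Rightarrow> (nat \<Rightarrow> complex) \<Rightarrow> fa" where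
  "lin_ext N J h = (\<lambda>w. \<Sum>k<N. h k * J k w)"

text \<open>Convolution (F*G)(h) = F(h_(1)) G(h_(2)).\<close>
definition conv :: "nat \<Rightarrow> (nat \<Rightarrow> fa) \<Rightarrow> (nat \<Rightarrow> fa) \<Rightarrow> (nat \<Rightarrow> complex) \<Rightarrow> fa" where
  "conv N F G h = (\<lambda>w. \<Sum>i<N. \<Sum>j<N. H_coprod h i j * fa_mult (F i) (G j) w)"

text \<open>Right H-colinearity: coact \<circ> j = (j \<otimes> id) \<circ> \<Delta>_H, compared componentwise in P \<otimes> H.\<close>
definition colinear :: "nat \<Rightarrow> fa set \<Rightarrow> (nat \<Rightarrow> fa) \<Rightarrow> bool" where
  "colinear N I J \<longleftrightarrow>
     (\<forall>h. \<forall>k<N. qeq I (coact N (lin_ext N J h) k) (\<lambda>w. \<Sum>i<N. H_coprod h i k * J i w))"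

definition cleft :: "nat \<Rightarrow> fa set \<Rightarrow> bool" where
  "cleft N I \<longleftrightarrow>
    (\<exists>J. (\<forall>k<N. fin (J k)) \<and> qeq I (J 0) fa_one \<and> colinear N I J \<and>
       (\<exists>G. (\<forall>k<N. fin (G k)) \<and>
          (\<forall>h. qeq I (conv N J G h) (fa_smult (H_counit N h) fa_one) \<and>
               qeq I (conv N G J h) (fa_smult (H_counit N h) fa_one))))"

text \<open>The coaction on F descends to F/I (i.e. the comodule algebra structure on the quotient
  is well defined): I is a graded subspace.\<close>
definition coaction_descends :: "nat \<Rightarrow> fa set \<Rightarrow> bool" where
  "coaction_descends N I \<longleftrightarrow> (\<forall>f\<in>I. \<forall>k<N. coact N f k \<in> I)"

end

theory Submission
  imports Defs "HOL-Library.Product_Lexorder" "HOL-Library.Product_Plus"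
begin

text \<open>The relations are homogeneous for the grading \<open>deg a = deg b = 1\<close>, so the ideal is stable
  under the automorphisms \<open>a \<mapsto> \<zeta>a\<close>, \<open>b \<mapsto> \<zeta>b\<close> (\<open>\<zeta>\<^sup>N = 1\<close>), whose character averages are the
  components of the coaction; hence the coaction descends.

  A cleaving map \<open>j\<close> would make \<open>j(u)\<close> a unit of degree \<open>1\<close> mod \<open>N\<close>.  In the representation of
  the noncommutative torus on \<open>\<ell>\<^sup>2(\<int>\<^sup>2)\<close> units of the image are monomials, so \<open>j(u)\<close>
  acts like \<open>c a\<^sup>k b\<^sup>l\<close> with \<open>k + l \<equiv> 1\<close> mod \<open>N\<close>.  In the representations on \<open>\<ell>\<^sup>2(\<nat>)\<close> in which
  \<open>a\<close> (resp. \<open>b\<close>) is a weighted unilateral shift, \<open>j(u)\<close> becomes a banded matrix with banded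
  inverse that is exponentially close, far along the diagonal, to a weighted shift by \<open>k\<close>
  (resp. \<open>l\<close>).  A trace of a commutator of truncations measures this shift as an index,
  which must vanish; so \<open>k = l = 0\<close>, contradicting \<open>N \<ge> 2\<close>.\<close>

section \<open>The free \<open>*\<close>-algebra\<close>

definition supp :: "fa \<Rightarrow> gen list set" where
  "supp f = {w. f w \<noteq> 0}"

lemma fin_iff_finite_supp: "fin f \<longleftrightarrow> finite (supp f)"
  by (simp add: fin_def supp_def)

lemma fin_subset: "fin f \<Longrightarrow> supp g \<subseteq> supp f \<Longrightarrow> fin g"
  unfolding fin_iff_finite_supp by (rule finite_subset)

lemma supp_one: "supp fa_one \<subseteq> {[]}"
  by (auto simp: supp_def fa_one_def split: if_splits)

lemma supp_gen: "supp (fa_gen g) \<subseteq> {[g]}"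
  by (auto simp: supp_def fa_gen_def split: if_splits)

lemma supp_add: "supp (fa_add f g) \<subseteq> supp f \<union> supp g"
  by (auto simp: supp_def fa_add_def)

lemma supp_diff: "supp (fa_diff f g) \<subseteq> supp f \<union> supp g"
  by (auto simp: supp_def fa_diff_def)

lemma supp_smult: "supp (fa_smult c f) \<subseteq> supp f"
  by (auto simp: supp_def fa_smult_def)

lemma supp_mult: "supp (fa_mult f g) \<subseteq> (\<lambda>(u, v). u @ v) ` (supp f \<times> supp g)"
proof
  fix w assume "w \<in> supp (fa_mult f g)"
  then obtain i where "i \<le> length w" "f (take i w) * g (drop i w) \<noteq> 0"
    unfolding supp_def fa_mult_def by (auto elim: sum.not_neutral_contains_not_neutral)
  then show "w \<in> (\<lambda>(u, v). u @ v) ` (supp f \<times> supp g)"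
    unfolding supp_def by (intro image_eqI[of _ _ "(take i w, drop i w)"]) auto
qed

lemma fin_zero [simp]: "fin fa_zero"
  by (simp add: fin_def fa_zero_def)

lemma fin_one [simp]: "fin fa_one"
  unfolding fin_iff_finite_supp by (rule finite_subset[OF supp_one]) simp

lemma fin_gen [simp]: "fin (fa_gen g)"
  unfolding fin_iff_finite_supp by (rule finite_subset[OF supp_gen]) simp

lemma fin_add [simp]: "fin f \<Longrightarrow> fin g \<Longrightarrow> fin (fa_add f g)"
  using supp_add finite_subset by (metis fin_iff_finite_supp finite_UnI)

lemma fin_diff [simp]: "fin f \<Longrightarrow> fin g \<Longrightarrow> fin (fa_diff f g)"
  using supp_diff finite_subset by (metis fin_iff_finite_supp finite_UnI)

lemma fin_smult [simp]: "fin f \<Longrightarrow> fin (fa_smult c f)"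
  by (rule fin_subset[OF _ supp_smult])

lemma fin_mult [simp]: "fin f \<Longrightarrow> fin g \<Longrightarrow> fin (fa_mult f g)"
  unfolding fin_iff_finite_supp using supp_mult finite_subset by blast

lemma star_gen_involutive [simp]: "star_gen (star_gen g) = g"
  by (cases g) auto

lemma star_gen_eq_iff: "star_gen x = g \<longleftrightarrow> x = star_gen g"
  by (cases x; cases g) auto

lemma rev_map_star_gen_involutive [simp]: "rev (map star_gen (rev (map star_gen w))) = w"
  by (induction w) auto

lemma map_star_gen_eq_single: "map star_gen w = [g] \<longleftrightarrow> w = [star_gen g]"
  by (cases w) (auto simp: star_gen_eq_iff)

lemma rev_map_star_gen_eq_single: "rev (map star_gen w) = [g] \<longleftrightarrow> w = [star_gen g]"
  by (cases w) (auto simp: star_gen_eq_iff)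

lemma fin_star [simp]: "fin f \<Longrightarrow> fin (fa_star f)"
proof -
  assume "fin f"
  have "supp (fa_star f) \<subseteq> (\<lambda>w. rev (map star_gen w)) ` supp f"
    by (auto simp: supp_def fa_star_def intro: image_eqI[of _ _ "rev (map star_gen _)"])
  with \<open>fin f\<close> show ?thesis
    unfolding fin_iff_finite_supp using finite_subset by blast
qed

lemma star_star [simp]: "fa_star (fa_star f) = f"
  by (simp add: fa_star_def)

lemma star_add [simp]: "fa_star (fa_add f g) = fa_add (fa_star f) (fa_star g)"
  by (simp add: fa_star_def fa_add_def)

lemma star_diff [simp]: "fa_star (fa_diff f g) = fa_diff (fa_star f) (fa_star g)"
  by (simp add: fa_star_def fa_diff_def)

lemma star_smult [simp]: "fa_star (fa_smult c f) = fa_smult (cnj c) (fa_star f)"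
  by (simp add: fa_star_def fa_smult_def)

lemma star_zero [simp]: "fa_star fa_zero = fa_zero"
  by (simp add: fa_star_def fa_zero_def)

lemma star_one [simp]: "fa_star fa_one = fa_one"
  by (simp add: fa_star_def fa_one_def fun_eq_iff)

lemma star_fa_gen [simp]: "fa_star (fa_gen g) = fa_gen (star_gen g)"
  by (simp add: fa_star_def fa_gen_def fun_eq_iff rev_map_star_gen_eq_single map_star_gen_eq_single)

lemma star_mult [simp]: "fa_star (fa_mult f g) = fa_mult (fa_star g) (fa_star f)"
proof (rule ext)
  fix w :: "gen list"
  let ?s = "\<lambda>w. rev (map star_gen w)"
  let ?n = "length w"
  have "fa_star (fa_mult f g) w = (\<Sum>i\<le>?n. cnj (f (take i (?s w))) * cnj (g (drop i (?s w))))"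
    by (simp add: fa_star_def fa_mult_def)
  also have "\<dots> = (\<Sum>i\<le>?n. cnj (f (take (?n - i) (?s w))) * cnj (g (drop (?n - i) (?s w))))"
    by (rule sum.reindex_bij_witness[where i="\<lambda>i. ?n - i" and j="\<lambda>i. ?n - i"]) auto
  also have "\<dots> = (\<Sum>i\<le>?n. cnj (g (?s (take i w))) * cnj (f (?s (drop i w))))"
    by (intro sum.cong refl) (simp add: take_rev drop_rev take_map drop_map)
  also have "\<dots> = fa_mult (fa_star g) (fa_star f) w"
    by (simp add: fa_star_def fa_mult_def)
  finally show "fa_star (fa_mult f g) w = fa_mult (fa_star g) (fa_star f) w" .
qed

lemma mult_smult_left: "fa_mult (fa_smult c f) g = fa_smult c (fa_mult f g)"
  by (simp add: fa_mult_def fa_smult_def sum_distrib_left mult_ac fun_eq_iff)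

lemma mult_smult_right: "fa_mult f (fa_smult c g) = fa_smult c (fa_mult f g)"
  by (simp add: fa_mult_def fa_smult_def sum_distrib_left mult_ac fun_eq_iff)

lemma star_ideal_sum:
  "finite S \<Longrightarrow> (\<And>t. t \<in> S \<Longrightarrow> g t \<in> star_ideal R) \<Longrightarrow> (\<lambda>w. \<Sum>t\<in>S. g t w) \<in> star_ideal R"
proof (induction S rule: finite_induct)
  case empty
  have "(\<lambda>w. \<Sum>t\<in>{}. g t w) = fa_zero" by (simp add: fa_zero_def)
  then show ?case by (simp add: star_ideal.zero)
next
  case (insert a S)
  have "(\<lambda>w. \<Sum>t\<in>insert a S. g t w) = fa_add (g a) (\<lambda>w. \<Sum>t\<in>S. g t w)"
    using insert by (simp add: fa_add_def)
  then show ?case using insert by (simp add: star_ideal.add)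
qed

section \<open>The coaction descends to the quotient\<close>

definition unit_root :: "nat \<Rightarrow> int \<Rightarrow> complex" where
  "unit_root N m = cis (2 * pi * of_int m / of_nat N)"

lemma unit_root_add: "unit_root N (a + b) = unit_root N a * unit_root N b"
  by (simp add: unit_root_def cis_mult add_divide_distrib distrib_left)

lemma cnj_unit_root: "cnj (unit_root N m) = unit_root N (- m)"
  by (simp add: unit_root_def cis_cnj)

lemma unit_root_power: "unit_root N m ^ t = unit_root N (int t * m)"
  unfolding unit_root_def DeMoivre by (rule arg_cong[where f=cis]) (simp add: mult_ac)

lemma sum_unit_root:
  assumes N: "0 < N"
  shows "(\<Sum>t<N. unit_root N (int t * m)) = (if int N dvd m then of_nat N else 0)"
proof (cases "int N dvd m")
  case True
  then obtain c where c: "m = int N * c" by blast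
  have "unit_root N (int t * m) = 1" for t
  proof -
    have "2 * pi * of_int (int t * m) / of_nat N = 2 * pi * of_int (int t * c)"
      using N by (simp add: c field_simps)
    then show ?thesis unfolding unit_root_def by simp
  qed
  then show ?thesis using True by simp
next
  case False
  have "unit_root N m \<noteq> 1"
  proof
    assume "unit_root N m = 1"
    then have "cos (2 * pi * of_int m / of_nat N) = 1"
      unfolding unit_root_def by (metis cis.sel(1) one_complex.sel(1))
    then obtain n :: int where "2 * pi * of_int m / of_nat N = of_int n * 2 * pi"
      using cos_one_2pi_int by blast
    then have "real_of_int m = of_int n * of_nat N" using N by (simp add: field_simps)
    then have "m = n * int N" by (metis of_int_eq_iff of_int_mult of_int_of_nat_eq)
    then show False using False by simp
  qed
  moreover have "unit_root N m ^ N = 1"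
  proof -
    have "2 * pi * of_int (int N * m) / of_nat N = 2 * pi * of_int m" using N by simp
    moreover have "cis (2 * pi * of_int m) = 1" by (rule cis_multiple_2pi) simp
    ultimately have "unit_root N (int N * m) = 1" unfolding unit_root_def by simp
    then show ?thesis by (simp add: unit_root_power)
  qed
  ultimately have "(\<Sum>t<N. unit_root N m ^ t) = 0" by (simp add: sum_gp_strict)
  then show ?thesis using False by (simp add: unit_root_power)
qed

definition grade_twist :: "nat \<Rightarrow> nat \<Rightarrow> fa \<Rightarrow> fa" where
  "grade_twist N t f = (\<lambda>w. unit_root N (int t * wdeg w) * f w)"

lemma wdeg_append: "wdeg (u @ v) = wdeg u + wdeg v"
  by (simp add: wdeg_def)

lemma wdeg_star: "wdeg (rev (map star_gen w)) = - wdeg w"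
proof (induction w)
  case (Cons g w)
  then show ?case by (cases g) (auto simp: wdeg_def)
qed (simp add: wdeg_def)

lemma grade_twist_mult: "grade_twist N t (fa_mult f g) = fa_mult (grade_twist N t f) (grade_twist N t g)"
proof (rule ext)
  fix w :: "gen list"
  have "unit_root N (int t * wdeg w) = unit_root N (int t * wdeg (take i w)) * unit_root N (int t * wdeg (drop i w))"
    for i
    using wdeg_append[of "take i w" "drop i w"] by (simp add: distrib_left unit_root_add)
  then show "grade_twist N t (fa_mult f g) w = fa_mult (grade_twist N t f) (grade_twist N t g) w"
    by (simp add: grade_twist_def fa_mult_def sum_distrib_left mult_ac)
qed

lemma grade_twist_star: "grade_twist N t (fa_star f) = fa_star (grade_twist N t f)"
  by (simp add: grade_twist_def fa_star_def wdeg_star cnj_unit_root)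

lemma grade_twist_add: "grade_twist N t (fa_add f g) = fa_add (grade_twist N t f) (grade_twist N t g)"
  by (simp add: grade_twist_def fa_add_def distrib_left)

lemma grade_twist_smult: "grade_twist N t (fa_smult c f) = fa_smult c (grade_twist N t f)"
  by (simp add: grade_twist_def fa_smult_def mult_ac)

lemma grade_twist_zero: "grade_twist N t fa_zero = fa_zero"
  by (simp add: grade_twist_def fa_zero_def)

lemma fin_grade_twist: "fin f \<Longrightarrow> fin (grade_twist N t f)"
  by (erule fin_subset) (auto simp: supp_def grade_twist_def)

definition homogeneous :: "int \<Rightarrow> fa \<Rightarrow> bool" where
  "homogeneous d f \<longleftrightarrow> (\<forall>w. f w \<noteq> 0 \<longrightarrow> wdeg w = d)"

lemma grade_twist_homogeneous: "homogeneous d f \<Longrightarrow> grade_twist N t f = fa_smult (unit_root N (int t * d)) f"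
  by (auto simp: homogeneous_def grade_twist_def fa_smult_def fun_eq_iff)

lemma homogeneous_diff: "homogeneous d f \<Longrightarrow> homogeneous d g \<Longrightarrow> homogeneous d (fa_diff f g)"
  unfolding homogeneous_def fa_diff_def by (metis diff_zero diff_self)

lemma homogeneous_smult: "homogeneous d f \<Longrightarrow> homogeneous d (fa_smult c f)"
  by (auto simp: homogeneous_def fa_smult_def)

lemma homogeneous_one: "homogeneous 0 fa_one"
  by (auto simp: homogeneous_def fa_one_def wdeg_def split: if_splits)

lemma homogeneous_gen: "homogeneous (deg_gen g) (fa_gen g)"
  by (auto simp: homogeneous_def fa_gen_def wdeg_def split: if_splits)

lemma homogeneous_mult:
  assumes f: "homogeneous d f" and g: "homogeneous e g" and "d + e = c"
  shows "homogeneous c (fa_mult f g)"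
  unfolding homogeneous_def
proof (intro allI impI)
  fix w assume "fa_mult f g w \<noteq> 0"
  then obtain i where "f (take i w) * g (drop i w) \<noteq> 0"
    unfolding fa_mult_def by (auto elim: sum.not_neutral_contains_not_neutral)
  then have "wdeg (take i w) = d" "wdeg (drop i w) = e" using f g by (auto simp: homogeneous_def)
  then show "wdeg w = c" using \<open>d + e = c\<close> by (metis append_take_drop_id wdeg_append)
qed

lemma rels_homogeneous: "r \<in> rels p q \<theta> \<Longrightarrow> \<exists>d. homogeneous d r"
  unfolding rels_def Let_def
  by (auto intro!: homogeneous_diff homogeneous_smult homogeneous_one
      homogeneous_mult[OF homogeneous_gen homogeneous_gen]
      homogeneous_mult[OF homogeneous_diff[OF homogeneous_one homogeneous_mult[OF homogeneous_gen homogeneous_gen]]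
        homogeneous_diff[OF homogeneous_one homogeneous_mult[OF homogeneous_gen homogeneous_gen]]])

lemma grade_twist_star_ideal:
  assumes R: "\<And>r. r \<in> R \<Longrightarrow> \<exists>d. homogeneous d r"
  shows "f \<in> star_ideal R \<Longrightarrow> grade_twist N t f \<in> star_ideal R"
proof (induction rule: star_ideal.induct)
  case zero
  then show ?case by (simp add: grade_twist_zero star_ideal.zero)
next
  case (gen r x y)
  then obtain d where d: "homogeneous d r" using R by blast
  have "grade_twist N t (fa_mult (fa_mult x r) y)
      = fa_smult (unit_root N (int t * d)) (fa_mult (fa_mult (grade_twist N t x) r) (grade_twist N t y))"
    by (simp add: grade_twist_mult grade_twist_homogeneous[OF d] mult_smult_left mult_smult_right)
  then show ?case using gen by (simp add: star_ideal.smult star_ideal.gen fin_grade_twist)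
next
  case (add f g)
  then show ?case by (simp add: grade_twist_add star_ideal.add)
next
  case (smult f c)
  then show ?case by (simp add: grade_twist_smult star_ideal.smult)
next
  case (star f)
  then show ?case by (simp add: grade_twist_star star_ideal.star)
qed

lemma coact_eq_average:
  assumes N: "0 < N" and k: "k < N"
  shows "coact N f k = (\<lambda>w. \<Sum>t<N. fa_smult (unit_root N (- (int t * int k)) / of_nat N) (grade_twist N t f) w)"
proof (rule ext)
  fix w
  have "(\<Sum>t<N. fa_smult (unit_root N (- (int t * int k)) / of_nat N) (grade_twist N t f) w)
      = f w / of_nat N * (\<Sum>t<N. unit_root N (int t * (wdeg w - int k)))"
    by (simp add: fa_smult_def grade_twist_def sum_distrib_left sum_distrib_right right_diff_distrib
        unit_root_add[symmetric] mult_ac)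
  also have "\<dots> = (if int N dvd (wdeg w - int k) then f w else 0)"
    using N by (simp add: sum_unit_root)
  also have "\<dots> = coact N f k w"
  proof -
    have "int N dvd (wdeg w - int k) \<longleftrightarrow> wdeg w mod int N = int k"
      using k by (metis mod_eq_dvd_iff mod_pos_pos_trivial of_nat_0_le_iff of_nat_less_iff)
    then show ?thesis by (simp add: coact_def)
  qed
  finally show "coact N f k w = (\<Sum>t<N. fa_smult (unit_root N (- (int t * int k)) / of_nat N) (grade_twist N t f) w)" ..
qed

theorem coaction_descends_S3: "0 < N \<Longrightarrow> coaction_descends N (S3_ideal p q \<theta>)"
  unfolding coaction_descends_def S3_ideal_def
  by (auto simp: coact_eq_average intro!: star_ideal_sum star_ideal.smult grade_twist_star_ideal rels_homogeneous)

section \<open>Representations of the free algebra by letters\<close>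

lemma sum_concat_splits:
  fixes F :: "gen list \<Rightarrow> gen list \<Rightarrow> 'a::comm_monoid_add"
  assumes A: "finite A" and B: "finite B" and S: "finite S"
    and sub: "(\<lambda>(u, v). u @ v) ` (A \<times> B) \<subseteq> S"
    and vanish: "\<And>u v. u \<notin> A \<or> v \<notin> B \<Longrightarrow> F u v = 0"
  shows "(\<Sum>w\<in>S. \<Sum>i\<le>length w. F (take i w) (drop i w)) = (\<Sum>u\<in>A. \<Sum>v\<in>B. F u v)"
proof -
  let ?splits = "{(w, i)\<in>Sigma S (\<lambda>w. {..length w}). take i w \<in> A \<and> drop i w \<in> B}"
  have "(\<Sum>w\<in>S. \<Sum>i\<le>length w. F (take i w) (drop i w)) =
        (\<Sum>(w, i)\<in>Sigma S (\<lambda>w. {..length w}). F (take i w) (drop i w))"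
    using S by (simp add: sum.Sigma)
  also have "\<dots> = (\<Sum>(w, i)\<in>?splits. F (take i w) (drop i w))"
    using S vanish by (intro sum.mono_neutral_right) auto
  also have "\<dots> = (\<Sum>(u, v)\<in>A \<times> B. F u v)"
    by (rule sum.reindex_bij_witness[where j="\<lambda>(w, i). (take i w, drop i w)"
          and i="\<lambda>(u, v). (u @ v, length u)"]) (use sub in \<open>auto simp: min_def\<close>)
  also have "\<dots> = (\<Sum>u\<in>A. \<Sum>v\<in>B. F u v)"
    by (simp add: sum.cartesian_product)
  finally show ?thesis .
qed

locale letter_rep =
  fixes G :: "gen \<Rightarrow> ('x \<Rightarrow> complex) \<Rightarrow> ('x \<Rightarrow> complex)"
  assumes G_linear: "G g (\<lambda>x. c * v x + u x) = (\<lambda>x. c * G g v x + G g u x)"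
begin

lemma G_zero: "G g (\<lambda>x. 0) = (\<lambda>x. 0)"
proof -
  have "G g (\<lambda>x. 1 * 0 + 0) = (\<lambda>x. 1 * G g (\<lambda>x. 0) x + G g (\<lambda>x. 0) x)"
    by (rule G_linear)
  then show ?thesis by (simp add: fun_eq_iff)
qed

fun word_op :: "gen list \<Rightarrow> ('x \<Rightarrow> complex) \<Rightarrow> ('x \<Rightarrow> complex)" where
  "word_op [] v = v"
| "word_op (g # w) v = G g (word_op w v)"

lemma word_op_append: "word_op (u @ w) v = word_op u (word_op w v)"
  by (induction u) auto

lemma word_op_zero: "word_op w (\<lambda>x. 0) = (\<lambda>x. 0)"
  by (induction w) (simp_all add: G_zero)

lemma word_op_sum:
  "finite S \<Longrightarrow> word_op w (\<lambda>x. \<Sum>i\<in>S. c i * v i x) = (\<lambda>x. \<Sum>i\<in>S. c i * word_op w (v i) x)"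
proof (induction S rule: finite_induct)
  case empty
  show ?case by (simp add: word_op_zero)
next
  case (insert a S)
  have linear: "word_op w (\<lambda>x. c * v x + u x) = (\<lambda>x. c * word_op w v x + word_op w u x)" for c v u
    by (induction w) (simp_all add: G_linear)
  show ?case using insert linear[of "c a" "v a"] by simp
qed

definition rep :: "fa \<Rightarrow> ('x \<Rightarrow> complex) \<Rightarrow> ('x \<Rightarrow> complex)" where
  "rep f v = (\<lambda>x. \<Sum>w\<in>supp f. f w * word_op w v x)"

lemma rep_superset:
  assumes "finite S" "supp f \<subseteq> S"
  shows "rep f v = (\<lambda>x. \<Sum>w\<in>S. f w * word_op w v x)"
  unfolding rep_def using assms by (intro ext sum.mono_neutral_left) (auto simp: supp_def)

lemma rep_add: "fin f \<Longrightarrow> fin g \<Longrightarrow> rep (fa_add f g) v = (\<lambda>x. rep f v x + rep g v x)"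
  using supp_add[of f g]
  by (simp add: rep_superset[of "supp f \<union> supp g"] fin_iff_finite_supp fa_add_def
      distrib_right sum.distrib)

lemma rep_diff: "fin f \<Longrightarrow> fin g \<Longrightarrow> rep (fa_diff f g) v = (\<lambda>x. rep f v x - rep g v x)"
  using supp_diff[of f g]
  by (simp add: rep_superset[of "supp f \<union> supp g"] fin_iff_finite_supp fa_diff_def
      left_diff_distrib sum_subtractf)

lemma rep_smult: "fin f \<Longrightarrow> rep (fa_smult c f) v = (\<lambda>x. c * rep f v x)"
  using supp_smult[of c f]
  by (simp add: rep_superset[of "supp f"] fin_iff_finite_supp fa_smult_def
      sum_distrib_left mult.assoc)

lemma rep_one: "rep fa_one v = v"
  by (subst rep_superset[OF _ supp_one]) (simp_all add: fa_one_def)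

lemma rep_fa_gen: "rep (fa_gen g) v = G g v"
  by (subst rep_superset[OF _ supp_gen]) (simp_all add: fa_gen_def)

lemma rep_zero: "rep fa_zero v = (\<lambda>x. 0)"
  by (simp add: rep_def supp_def fa_zero_def)

lemma rep_zero_vec: "rep f (\<lambda>x. 0) = (\<lambda>x. 0)"
  by (simp add: rep_def word_op_zero)

lemma rep_sum:
  "finite S \<Longrightarrow> rep f (\<lambda>x. \<Sum>i\<in>S. c i * v i x) = (\<lambda>x. \<Sum>i\<in>S. c i * rep f (v i) x)"
  by (simp add: rep_def word_op_sum sum_distrib_left sum.swap[of _ S] mult.left_commute)

lemma rep_mult:
  assumes f: "fin f" and g: "fin g"
  shows "rep (fa_mult f g) v = rep f (rep g v)"
proof (rule ext)
  fix x
  let ?A = "supp f" and ?B = "supp g"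
  let ?S = "(\<lambda>(u, v). u @ v) ` (?A \<times> ?B)"
  have A: "finite ?A" and B: "finite ?B" using f g by (simp_all add: fin_iff_finite_supp)
  then have S: "finite ?S" by simp
  have "rep (fa_mult f g) v x = (\<Sum>w\<in>?S. fa_mult f g w * word_op w v x)"
    using S supp_mult by (simp add: rep_superset[of ?S])
  also have "\<dots> = (\<Sum>w\<in>?S. \<Sum>i\<le>length w.
      f (take i w) * g (drop i w) * word_op (take i w @ drop i w) v x)"
    by (simp add: fa_mult_def sum_distrib_right)
  also have "\<dots> = (\<Sum>u\<in>?A. \<Sum>w\<in>?B. f u * g w * word_op (u @ w) v x)"
    by (rule sum_concat_splits[OF A B S]) (auto simp: supp_def)
  also have "\<dots> = rep f (rep g v) x"
    using word_op_sum[OF B, of _ g "\<lambda>w. word_op w v"]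
    by (simp add: rep_def word_op_append sum_distrib_left mult.assoc)
  finally show "rep (fa_mult f g) v x = rep f (rep g v) x" .
qed

lemma rep_vanishes_on_star_ideal:
  assumes R: "\<And>r. r \<in> R \<Longrightarrow> fin r \<and> rep r = (\<lambda>v x. 0) \<and> rep (fa_star r) = (\<lambda>v x. 0)"
  shows "f \<in> star_ideal R \<Longrightarrow> fin f \<and> rep f = (\<lambda>v x. 0) \<and> rep (fa_star f) = (\<lambda>v x. 0)"
proof (induction rule: star_ideal.induct)
  case zero
  show ?case by (simp add: rep_zero fun_eq_iff)
next
  case (gen r x y)
  with R have "fin r" "rep r = (\<lambda>v x. 0)" "rep (fa_star r) = (\<lambda>v x. 0)" by auto
  with gen show ?case by (simp add: rep_mult rep_zero_vec)
next
  case (add f g)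
  then show ?case by (simp add: rep_add fun_eq_iff)
next
  case (smult f c)
  then show ?case by (simp add: rep_smult fun_eq_iff)
next
  case (star f)
  then show ?case by simp
qed

lemma rep_eq_if_diff_vanishes:
  "fin f \<Longrightarrow> fin g \<Longrightarrow> rep (fa_diff f g) = (\<lambda>v x. 0) \<Longrightarrow> rep f = rep g"
  by (auto simp: rep_diff fun_eq_iff)

lemma rep_inverse: "fin f \<Longrightarrow> fin g \<Longrightarrow> rep (fa_mult f g) = rep fa_one \<Longrightarrow> rep f (rep g v) = v"
  by (metis rep_mult rep_one)

end

lemma (in letter_rep) rep_vanishes_on_S3_ideal:
  fixes p q \<theta> :: real
  defines "z \<equiv> cis (2 * pi * \<theta>)"
  assumes ab: "\<And>v. G GA (G GB v) = (\<lambda>x. z * G GB (G GA v) x)"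
    and bs_as: "\<And>v. G GBs (G GAs v) = (\<lambda>x. cnj z * G GAs (G GBs v) x)"
    and a_bs: "\<And>v. G GA (G GBs v) = (\<lambda>x. cnj z * G GBs (G GA v) x)"
    and b_as: "\<And>v. G GB (G GAs v) = (\<lambda>x. z * G GAs (G GB v) x)"
    and as_a: "\<And>v. G GAs (G GA v) = (\<lambda>x. of_real p * G GA (G GAs v) x + of_real (1 - p) * v x)"
    and bs_b: "\<And>v. G GBs (G GB v) = (\<lambda>x. of_real q * G GB (G GBs v) x + of_real (1 - q) * v x)"
    and a_as: "\<And>v. G GA (G GAs (\<lambda>x. v x - G GB (G GBs v) x)) = (\<lambda>x. v x - G GB (G GBs v) x)"
    and b_bs: "\<And>v. G GB (G GBs (\<lambda>x. v x - G GA (G GAs v) x)) = (\<lambda>x. v x - G GA (G GAs v) x)"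
  shows "f \<in> S3_ideal p q \<theta> \<Longrightarrow> fin f \<and> rep f = (\<lambda>v x. 0)"
proof -
  assume f: "f \<in> S3_ideal p q \<theta>"
  have "fin r \<and> rep r = (\<lambda>v x. 0) \<and> rep (fa_star r) = (\<lambda>v x. 0)" if "r \<in> rels p q \<theta>" for r
    using that unfolding rels_def Let_def z_def[symmetric]
    by (elim insertE emptyE; hypsubst;
        simp add: fun_eq_iff rep_diff rep_smult rep_mult rep_fa_gen rep_one
          ab bs_as a_bs b_as as_a bs_b a_as b_bs)
  from rep_vanishes_on_star_ideal[OF this f[unfolded S3_ideal_def]] show ?thesis
    by blast
qed

section \<open>The torus representation and the two shift representations\<close>

definition phase :: "real \<Rightarrow> int \<Rightarrow> complex" where
  "phase \<theta> m = cis (2 * pi * \<theta> * of_int m)"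

lemma phase_add: "phase \<theta> (m + n) = phase \<theta> m * phase \<theta> n"
  by (simp add: phase_def cis_mult distrib_left)

lemma phase_zero [simp]: "phase \<theta> 0 = 1"
  by (simp add: phase_def)

lemma phase_one: "cis (2 * pi * \<theta>) = phase \<theta> 1"
  by (simp add: phase_def)

lemma cnj_phase: "cnj (phase \<theta> m) = phase \<theta> (- m)"
  by (simp add: phase_def cis_cnj)

lemma phase_uminus_angle: "phase (- \<theta>) m = phase \<theta> (- m)"
  by (simp add: phase_def)

lemma norm_phase [simp]: "cmod (phase \<theta> m) = 1"
  by (simp add: phase_def)

lemma phase_nonzero [simp]: "phase \<theta> m \<noteq> 0"
  by (simp add: phase_def)

lemma phase_mult_assoc: "phase \<theta> m * (phase \<theta> n * c) = phase \<theta> (m + n) * c"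
  by (simp add: phase_add)

text \<open>The representation of the noncommutative torus on \<open>\<ell>\<^sup>2(\<int>\<^sup>2)\<close>, and the representation on
  \<open>\<ell>\<^sup>2(\<nat>)\<close> in which \<open>a\<close> is a weighted unilateral shift and \<open>b\<close> is diagonal.  Exchanging the
  roles of \<open>a\<close> and \<open>b\<close> and replacing \<open>\<theta>\<close> by \<open>-\<theta>\<close> gives the representation in which \<open>b\<close> is
  the shift.\<close>

fun torus_gen :: "real \<Rightarrow> gen \<Rightarrow> (int \<times> int \<Rightarrow> complex) \<Rightarrow> (int \<times> int \<Rightarrow> complex)" where
  "torus_gen \<theta> GA v = (\<lambda>x. v (fst x - 1, snd x))"
| "torus_gen \<theta> GAs v = (\<lambda>x. v (fst x + 1, snd x))"
| "torus_gen \<theta> GB v = (\<lambda>x. phase \<theta> (- fst x) * v (fst x, snd x - 1))"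
| "torus_gen \<theta> GBs v = (\<lambda>x. phase \<theta> (fst x) * v (fst x, snd x + 1))"

fun shift_gen :: "real \<Rightarrow> real \<Rightarrow> gen \<Rightarrow> (nat \<Rightarrow> complex) \<Rightarrow> (nat \<Rightarrow> complex)" where
  "shift_gen p \<theta> GA v = (\<lambda>n. if n = 0 then 0 else v (n - 1))"
| "shift_gen p \<theta> GAs v = (\<lambda>n. (1 - of_real p ^ (n + 1)) * v (n + 1))"
| "shift_gen p \<theta> GB v = (\<lambda>n. phase \<theta> (- int n) * v n)"
| "shift_gen p \<theta> GBs v = (\<lambda>n. phase \<theta> (int n) * v n)"

fun swap_gen :: "gen \<Rightarrow> gen" where
  "swap_gen GA = GB" | "swap_gen GAs = GBs" | "swap_gen GB = GA" | "swap_gen GBs = GAs"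

interpretation torus: letter_rep "torus_gen \<theta>" for \<theta>
  by unfold_locales (case_tac g; auto simp: fun_eq_iff algebra_simps)

interpretation shift_a: letter_rep "shift_gen p \<theta>" for p \<theta>
  by unfold_locales (case_tac g; auto simp: fun_eq_iff algebra_simps)

interpretation shift_b: letter_rep "\<lambda>g. shift_gen q (- \<theta>) (swap_gen g)" for q \<theta>
  by unfold_locales (case_tac g; auto simp: fun_eq_iff algebra_simps)

lemma power_pred_mult: "0 < n \<Longrightarrow> (c::complex) * c ^ (n - Suc 0) = c ^ n"
  by (cases n) auto

lemma torus_rep_vanishes: "f \<in> S3_ideal p q \<theta> \<Longrightarrow> fin f \<and> torus.rep \<theta> f = (\<lambda>v x. 0)"
  by (rule torus.rep_vanishes_on_S3_ideal, unfold phase_one cnj_phase)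
    (auto simp: fun_eq_iff phase_add[symmetric] phase_mult_assoc algebra_simps)

lemma shift_a_rep_vanishes: "f \<in> S3_ideal p q \<theta> \<Longrightarrow> fin f \<and> shift_a.rep p \<theta> f = (\<lambda>v x. 0)"
  by (rule shift_a.rep_vanishes_on_S3_ideal, unfold phase_one cnj_phase)
    (auto simp: fun_eq_iff phase_add[symmetric] phase_mult_assoc algebra_simps power_pred_mult)

lemma shift_b_rep_vanishes: "f \<in> S3_ideal p q \<theta> \<Longrightarrow> fin f \<and> shift_b.rep q \<theta> f = (\<lambda>v x. 0)"
  by (rule shift_b.rep_vanishes_on_S3_ideal, unfold phase_one cnj_phase)
    (auto simp: fun_eq_iff phase_add[symmetric] phase_mult_assoc phase_uminus_angle algebra_simps
      power_pred_mult)

section \<open>Units of the torus representation are monomials\<close>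

instance prod :: (linordered_ab_group_add, linordered_ab_group_add) linordered_ab_group_add
  by standard (auto simp: less_eq_prod_def)

lemma Max_uminus_image:
  fixes S :: "'a::linordered_ab_group_add set"
  assumes "finite S" "S \<noteq> {}"
  shows "Max (uminus ` S) = - Min S"
  using assms by (intro Max_eqI) auto

lemma convolution_unit_nonzero:
  fixes F H :: "'a::ab_group_add \<Rightarrow> complex"
  assumes unit: "\<And>x. (\<Sum>b\<in>BF. F b * \<phi> x b * H (x - b)) = (if x = 0 then 1 else 0)"
  shows "{b. F b \<noteq> 0} \<noteq> {}" "{b. H b \<noteq> 0} \<noteq> {}"
proof -
  have "(\<Sum>b\<in>BF. F b * \<phi> 0 b * H (0 - b)) \<noteq> 0" using unit[of 0] by simp
  then show "{b. F b \<noteq> 0} \<noteq> {}" "{b. H b \<noteq> 0} \<noteq> {}"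
    by (auto intro: sum.neutral)
qed

lemma convolution_unit_Max:
  fixes F H :: "'a::linordered_ab_group_add \<Rightarrow> complex" and \<phi> :: "'a \<Rightarrow> 'a \<Rightarrow> complex"
  assumes BF: "finite BF" "\<And>b. b \<notin> BF \<Longrightarrow> F b = 0" and BH: "finite {b. H b \<noteq> 0}"
    and \<phi>: "\<And>x b. \<phi> x b \<noteq> 0"
    and unit: "\<And>x. (\<Sum>b\<in>BF. F b * \<phi> x b * H (x - b)) = (if x = 0 then 1 else 0)"
  shows "Max {b. F b \<noteq> 0} + Max {b. H b \<noteq> 0} = 0"
proof -
  let ?SF = "{b. F b \<noteq> 0}" and ?SH = "{b. H b \<noteq> 0}"
  have fin_SF: "finite ?SF" by (rule finite_subset[OF _ BF(1)]) (use BF(2) in blast)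
  note ne = convolution_unit_nonzero[OF unit]
  define m n where "m = Max ?SF" and "n = Max ?SH"
  have m: "F m \<noteq> 0" and n: "H n \<noteq> 0"
    using Max_in[OF fin_SF ne(1)] Max_in[OF BH ne(2)] by (simp_all add: m_def n_def)
  have "(\<Sum>b\<in>BF. F b * \<phi> (m + n) b * H (m + n - b)) = (\<Sum>b\<in>{m}. F b * \<phi> (m + n) b * H (m + n - b))"
  proof (rule sum.mono_neutral_right)
    show "{m} \<subseteq> BF" using m BF(2) by blast
    show "\<forall>b\<in>BF - {m}. F b * \<phi> (m + n) b * H (m + n - b) = 0"
    proof
      fix b assume b: "b \<in> BF - {m}"
      show "F b * \<phi> (m + n) b * H (m + n - b) = 0"
      proof (cases "F b = 0")
        case False
        then have "b \<le> m" using Max_ge[OF fin_SF, of b] by (simp add: m_def)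
        with b have "b < m" by auto
        then have "n < m + n - b" by (simp add: less_diff_eq add.commute)
        then have "\<not> m + n - b \<le> n" by simp
        then have "H (m + n - b) = 0" using Max_ge[OF BH, of "m + n - b"] by (auto simp: n_def)
        then show ?thesis by simp
      qed simp
    qed
  qed (use BF in simp)
  then have "m + n = 0" using unit[of "m + n"] m n \<phi>[of "m + n" m] by (simp split: if_splits)
  then show ?thesis by (simp add: m_def n_def)
qed

lemma convolution_unit_Min:
  fixes F H :: "'a::linordered_ab_group_add \<Rightarrow> complex" and \<phi> :: "'a \<Rightarrow> 'a \<Rightarrow> complex"
  assumes BF: "finite BF" "\<And>b. b \<notin> BF \<Longrightarrow> F b = 0" and BH: "finite {b. H b \<noteq> 0}"
    and \<phi>: "\<And>x b. \<phi> x b \<noteq> 0"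
    and unit: "\<And>x. (\<Sum>b\<in>BF. F b * \<phi> x b * H (x - b)) = (if x = 0 then 1 else 0)"
  shows "Min {b. F b \<noteq> 0} + Min {b. H b \<noteq> 0} = 0"
proof -
  let ?SF = "{b. F b \<noteq> 0}" and ?SH = "{b. H b \<noteq> 0}"
  have fin_SF: "finite ?SF" by (rule finite_subset[OF _ BF(1)]) (use BF(2) in blast)
  note ne = convolution_unit_nonzero[OF unit]
  have reflected: "(\<Sum>b\<in>uminus ` BF. F (- b) * \<phi> (- x) (- b) * H (- (x - b))) = (if x = 0 then 1 else 0)"
    for x
  proof -
    have "(\<Sum>b\<in>uminus ` BF. F (- b) * \<phi> (- x) (- b) * H (- (x - b)))
        = (\<Sum>b\<in>BF. F b * \<phi> (- x) b * H (- x - b))"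
    proof (rule sum.reindex_cong[where l=uminus])
      fix b
      have "- (x - - b) = - x - b" by simp
      then show "F (- (- b)) * \<phi> (- x) (- (- b)) * H (- (x - - b)) = F b * \<phi> (- x) b * H (- x - b)"
        by simp
    qed (simp_all add: inj_on_def)
    then show ?thesis using unit[of "- x"] by simp
  qed
  have neg_SF: "{b. F (- b) \<noteq> 0} = uminus ` ?SF" and neg_SH: "{b. H (- b) \<noteq> 0} = uminus ` ?SH"
    unfolding set_eq_iff image_iff by (metis (mono_tags) mem_Collect_eq minus_minus)+
  have "Max {b. F (- b) \<noteq> 0} + Max {b. H (- b) \<noteq> 0} = 0"
  proof (rule convolution_unit_Max[OF _ _ _ _ reflected])
    show "finite (uminus ` BF)" using BF(1) by simp
    show "F (- b) = 0" if "b \<notin> uminus ` BF" for b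
      using BF(2) that by (metis image_eqI minus_minus)
    show "finite {b. H (- b) \<noteq> 0}" unfolding neg_SH using BH by simp
    show "\<phi> (- x) (- b) \<noteq> 0" for x b by (rule \<phi>)
  qed
  then have "Max (uminus ` ?SF) + Max (uminus ` ?SH) = 0" by (simp only: neg_SF neg_SH)
  then have "- (Min ?SF + Min ?SH) = 0"
    by (simp only: Max_uminus_image[OF fin_SF ne(1)] Max_uminus_image[OF BH ne(2)] minus_add_distrib)
  then show ?thesis by (rule iffD1[OF neg_equal_0_iff_equal])
qed

text \<open>Units of a twisted group algebra of a totally ordered group are monomials:
  the top and bottom terms of a product are products of top and bottom terms.\<close>

lemma convolution_unit_monomial:
  fixes F H :: "'a::linordered_ab_group_add \<Rightarrow> complex" and \<phi> :: "'a \<Rightarrow> 'a \<Rightarrow> complex"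
  assumes BF: "finite BF" "\<And>b. b \<notin> BF \<Longrightarrow> F b = 0" and BH: "finite {b. H b \<noteq> 0}"
    and \<phi>: "\<And>x b. \<phi> x b \<noteq> 0"
    and unit: "\<And>x. (\<Sum>b\<in>BF. F b * \<phi> x b * H (x - b)) = (if x = 0 then 1 else 0)"
  obtains m where "m \<in> BF" "\<And>b. b \<noteq> m \<Longrightarrow> F b = 0" "\<And>b. b \<noteq> - m \<Longrightarrow> H b = 0"
    "F m * \<phi> 0 m * H (- m) = 1"
proof -
  let ?SF = "{b. F b \<noteq> 0}" and ?SH = "{b. H b \<noteq> 0}"
  have fin_SF: "finite ?SF" by (rule finite_subset[OF _ BF(1)]) (use BF(2) in blast)
  note ne = convolution_unit_nonzero[OF unit]
  have "Max ?SF + Max ?SH = 0" by (rule convolution_unit_Max[OF BF BH \<phi> unit])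
  then have Max: "Max ?SF = - Max ?SH" by (simp only: eq_neg_iff_add_eq_0)
  have "Min ?SF + Min ?SH = 0" by (rule convolution_unit_Min[OF BF BH \<phi> unit])
  then have Min: "Min ?SF = - Min ?SH" by (simp only: eq_neg_iff_add_eq_0)
  have "Min ?SH \<le> Max ?SH" "Min ?SF \<le> Max ?SF"
    by (rule Min_le[OF BH Max_in[OF BH ne(2)]], rule Min_le[OF fin_SF Max_in[OF fin_SF ne(1)]])
  then have MaxF: "Max ?SF \<le> Min ?SF" and MaxH: "Max ?SH \<le> Min ?SH"
    unfolding Max Min by simp_all
  define m where "m = Max ?SF"
  have Fm: "F b = 0" if "b \<noteq> m" for b
  proof (rule ccontr)
    assume "F b \<noteq> 0"
    then have "b \<le> Max ?SF" "Min ?SF \<le> b" using fin_SF by simp_all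
    then have "b = Max ?SF" using MaxF by (meson antisym order.trans)
    with that show False by (simp add: m_def)
  qed
  have Hm: "H b = 0" if "b \<noteq> - m" for b
  proof (rule ccontr)
    assume "H b \<noteq> 0"
    then have "b \<le> Max ?SH" "Min ?SH \<le> b" using BH by simp_all
    then have "b = Max ?SH" using MaxH by (meson antisym order.trans)
    with that Max show False by (simp add: m_def)
  qed
  have m: "m \<in> BF" using BF(2) Max_in[OF fin_SF ne(1)] by (auto simp: m_def)
  have "(\<Sum>b\<in>BF. F b * \<phi> 0 b * H (0 - b)) = (\<Sum>b\<in>{m}. F b * \<phi> 0 b * H (0 - b))"
    by (rule sum.mono_neutral_right) (use BF m Fm in auto)
  then have "F m * \<phi> 0 m * H (- m) = 1" using unit[of 0] by simp
  with m Fm Hm that show ?thesis by blast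
qed

fun adeg :: "gen list \<Rightarrow> int" where
  "adeg [] = 0" | "adeg (GA # w) = adeg w + 1" | "adeg (GAs # w) = adeg w - 1"
| "adeg (GB # w) = adeg w" | "adeg (GBs # w) = adeg w"

fun bdeg :: "gen list \<Rightarrow> int" where
  "bdeg [] = 0" | "bdeg (GB # w) = bdeg w + 1" | "bdeg (GBs # w) = bdeg w - 1"
| "bdeg (GA # w) = bdeg w" | "bdeg (GAs # w) = bdeg w"

definition bideg :: "gen list \<Rightarrow> int \<times> int" where
  "bideg w = (adeg w, bdeg w)"

text \<open>In the torus representation a word acts as \<open>word_phase \<theta> w\<close> times the normally ordered
  monomial \<open>a\<^bsup>adeg w\<^esup> b\<^bsup>bdeg w\<^esup>\<close> (see \<open>torus_word_op\<close>).\<close>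

fun word_phase :: "real \<Rightarrow> gen list \<Rightarrow> complex" where
  "word_phase \<theta> [] = 1"
| "word_phase \<theta> (GA # w) = word_phase \<theta> w"
| "word_phase \<theta> (GAs # w) = word_phase \<theta> w"
| "word_phase \<theta> (GB # w) = word_phase \<theta> w * phase \<theta> (- adeg w)"
| "word_phase \<theta> (GBs # w) = word_phase \<theta> w * phase \<theta> (adeg w)"

lemma abs_adeg_le_length: "\<bar>adeg w\<bar> \<le> int (length w)"
proof (induction w)
  case (Cons g w)
  then show ?case by (cases g) auto
qed simp

lemma abs_bdeg_le_length: "\<bar>bdeg w\<bar> \<le> int (length w)"
proof (induction w)
  case (Cons g w)
  then show ?case by (cases g) auto
qed simp

lemma wdeg_eq_adeg_add_bdeg: "wdeg w = adeg w + bdeg w"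
proof (induction w)
  case (Cons g w)
  then show ?case by (cases g) (auto simp: wdeg_def)
qed (simp add: wdeg_def)

lemma adeg_swap [simp]: "adeg (map swap_gen w) = bdeg w"
  and bdeg_swap [simp]: "bdeg (map swap_gen w) = adeg w"
proof (induction w)
  case (Cons g w)
  case 1 show ?case using Cons by (cases g) auto
  case 2 show ?case using Cons by (cases g) auto
qed simp_all

lemma word_phase_swap:
  "word_phase (- \<theta>) (map swap_gen w) = word_phase \<theta> w * phase \<theta> (adeg w * bdeg w)"
proof (induction w)
  case (Cons g w)
  then show ?case
    by (cases g) (simp_all add: phase_uminus_angle phase_add[symmetric] phase_mult_assoc algebra_simps)
qed simp

lemma torus_word_op:
  "torus.word_op \<theta> w v x = word_phase \<theta> w * phase \<theta> (- (fst x - adeg w) * bdeg w) * v (x - bideg w)"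
proof (induction w arbitrary: x)
  case (Cons g w)
  then show ?case
    by (cases g; cases x) (simp_all add: bideg_def algebra_simps phase_add[symmetric] phase_mult_assoc)
next
  case Nil
  show ?case by (cases x) (simp add: bideg_def)
qed

definition torus_coeff :: "real \<Rightarrow> fa \<Rightarrow> int \<times> int \<Rightarrow> complex" where
  "torus_coeff \<theta> f b = (\<Sum>w\<in>{w\<in>supp f. bideg w = b}. f w * word_phase \<theta> w)"

lemma sum_supp_by_bideg:
  assumes "fin f"
  shows "(\<Sum>w\<in>supp f. f w * word_phase \<theta> w * \<Phi> (bideg w)) = (\<Sum>b\<in>bideg ` supp f. torus_coeff \<theta> f b * \<Phi> b)"
proof -
  have "(\<Sum>w\<in>supp f. f w * word_phase \<theta> w * \<Phi> (bideg w)) =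
        (\<Sum>b\<in>bideg ` supp f. \<Sum>w\<in>{w\<in>supp f. bideg w = b}. f w * word_phase \<theta> w * \<Phi> (bideg w))"
    using assms by (intro sum.image_gen) (simp add: fin_iff_finite_supp)
  also have "\<dots> = (\<Sum>b\<in>bideg ` supp f. torus_coeff \<theta> f b * \<Phi> b)"
    unfolding torus_coeff_def by (auto simp: sum_distrib_right intro!: sum.cong)
  finally show ?thesis .
qed

lemma torus_coeff_eq_0: "b \<notin> bideg ` supp f \<Longrightarrow> torus_coeff \<theta> f b = 0"
  unfolding torus_coeff_def by (subst sum.neutral) auto

lemma torus_rep_eq:
  assumes "fin f"
  shows "torus.rep \<theta> f v x =
    (\<Sum>b\<in>bideg ` supp f. torus_coeff \<theta> f b * phase \<theta> (- (fst x - fst b) * snd b) * v (x - b))"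
proof -
  have "torus.rep \<theta> f v x = (\<Sum>w\<in>supp f. f w * word_phase \<theta> w *
      (\<lambda>b. phase \<theta> (- (fst x - fst b) * snd b) * v (x - b)) (bideg w))"
    by (simp add: torus.rep_def torus_word_op bideg_def mult.assoc)
  also have "\<dots> = (\<Sum>b\<in>bideg ` supp f. torus_coeff \<theta> f b *
      (\<lambda>b. phase \<theta> (- (fst x - fst b) * snd b) * v (x - b)) b)"
    by (rule sum_supp_by_bideg[OF assms])
  finally show ?thesis by (simp add: mult.assoc)
qed

definition dirac :: "'a \<Rightarrow> 'a \<Rightarrow> complex" where
  "dirac a = (\<lambda>x. if x = a then 1 else 0)"

lemma torus_rep_dirac: "fin f \<Longrightarrow> torus.rep \<theta> f (dirac 0) = torus_coeff \<theta> f"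
proof (rule ext)
  fix x assume f: "fin f"
  have "torus.rep \<theta> f (dirac 0) x = (\<Sum>b\<in>bideg ` supp f. if b = x then torus_coeff \<theta> f b else 0)"
    unfolding torus_rep_eq[OF f] by (intro sum.cong refl) (auto simp: dirac_def)
  also have "\<dots> = torus_coeff \<theta> f x"
    using f torus_coeff_eq_0[of x f \<theta>] by (auto simp: fin_iff_finite_supp sum.delta)
  finally show "torus.rep \<theta> f (dirac 0) x = torus_coeff \<theta> f x" .
qed

lemma torus_unit_monomial:
  assumes J: "fin J" and V: "fin V" and JV: "torus.rep \<theta> (fa_mult J V) = torus.rep \<theta> fa_one"
  obtains m where "m \<in> bideg ` supp J" "\<And>b. b \<noteq> m \<Longrightarrow> torus_coeff \<theta> J b = 0"
    "\<And>b. b \<noteq> - m \<Longrightarrow> torus_coeff \<theta> V b = 0"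
    "torus_coeff \<theta> J m * phase \<theta> (fst m * snd m) * torus_coeff \<theta> V (- m) = 1"
proof -
  have "torus.rep \<theta> J (torus.rep \<theta> V (dirac 0)) = dirac 0"
    by (rule torus.rep_inverse[OF J V JV])
  then have "torus.rep \<theta> J (torus_coeff \<theta> V) = dirac 0"
    by (simp only: torus_rep_dirac[OF V])
  then have unit: "(\<Sum>b\<in>bideg ` supp J. torus_coeff \<theta> J b * phase \<theta> (- (fst x - fst b) * snd b)
      * torus_coeff \<theta> V (x - b)) = (if x = 0 then 1 else 0)" for x
    using torus_rep_eq[OF J, of \<theta> "torus_coeff \<theta> V" x] by (simp add: dirac_def)
  have fin_V: "finite {b. torus_coeff \<theta> V b \<noteq> 0}"
    using V torus_coeff_eq_0[of _ V \<theta>] unfolding fin_iff_finite_supp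
    by (metis (mono_tags, lifting) finite_imageI finite_subset mem_Collect_eq subsetI)
  show ?thesis
  proof (rule convolution_unit_monomial[OF _ _ fin_V _ unit])
    show "finite (bideg ` supp J)" using J by (simp add: fin_iff_finite_supp)
    show "torus_coeff \<theta> J b = 0" if "b \<notin> bideg ` supp J" for b
      using that by (rule torus_coeff_eq_0)
  next
    fix m assume "m \<in> bideg ` supp J" "\<And>b. b \<noteq> m \<Longrightarrow> torus_coeff \<theta> J b = 0"
      "\<And>b. b \<noteq> - m \<Longrightarrow> torus_coeff \<theta> V b = 0"
      "torus_coeff \<theta> J m * phase \<theta> (- (fst 0 - fst m) * snd m) * torus_coeff \<theta> V (- m) = 1"
    then show thesis by (intro that) simp_all
  qed simp
qed

section \<open>Shift representations approximate the torus representation\<close>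

lemma norm_one_minus_power_le_1: "0 \<le> p \<Longrightarrow> p \<le> 1 \<Longrightarrow> cmod (1 - complex_of_real p ^ n) \<le> 1"
proof -
  assume "0 \<le> p" "p \<le> 1"
  then have "0 \<le> p ^ n" "p ^ n \<le> 1" by (auto intro: power_le_one)
  moreover have "cmod (1 - complex_of_real p ^ n) = \<bar>1 - p ^ n\<bar>"
    by (metis norm_of_real of_real_1 of_real_diff of_real_power)
  ultimately show ?thesis by linarith
qed

lemma shift_word_supp: "shift_a.word_op p \<theta> w (dirac j) i \<noteq> 0 \<Longrightarrow> int i = int j + adeg w"
proof (induction w arbitrary: i)
  case Nil
  then show ?case by (simp add: dirac_def split: if_splits)
next
  case (Cons g w)
  show ?case
  proof (cases g)
    case GA
    then show ?thesis using Cons.prems Cons.IH[of "i - 1"] by (auto split: if_splits)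
  next
    case GAs
    then show ?thesis using Cons.prems Cons.IH[of "i + 1"] by auto
  qed (use Cons in auto)
qed

lemma norm_shift_word_le_1:
  "0 \<le> p \<Longrightarrow> p \<le> 1 \<Longrightarrow> cmod (shift_a.word_op p \<theta> w (dirac j) i) \<le> 1"
proof (induction w arbitrary: i)
  case Nil
  then show ?case by (simp add: dirac_def)
next
  case (Cons g w)
  show ?case
  proof (cases g)
    case GAs
    have "cmod ((1 - complex_of_real p ^ (i + 1)) * shift_a.word_op p \<theta> w (dirac j) (i + 1)) \<le> 1 * 1"
      unfolding norm_mult using Cons norm_one_minus_power_le_1[of p "i + 1"] by (intro mult_mono) auto
    then show ?thesis using GAs by simp
  qed (use Cons in \<open>auto simp: norm_mult\<close>)
qed

text \<open>The weight \<open>1 - p\<^sup>i\<^sup>+\<^sup>1\<close> of \<open>a\<^sup>*\<close> differs from \<open>1\<close> by \<open>p\<^sup>i\<^sup>+\<^sup>1\<close>, which is small because a word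
  \<open>w\<close> applied to \<open>\<delta>\<^sub>j\<close> is supported on indices \<open>\<ge> j - |w|\<close>.\<close>

lemma norm_shift_weight_defect:
  assumes p: "0 \<le> p" "p \<le> 1"
  shows "cmod (complex_of_real p ^ (i + 1) * shift_a.word_op p \<theta> w (dirac j) (i + 1)) \<le> p ^ (j - length w)"
proof (cases "shift_a.word_op p \<theta> w (dirac j) (i + 1) = 0")
  case False
  then have "int (i + 1) = int j + adeg w" by (rule shift_word_supp)
  then have "j - length w \<le> i + 1" using abs_adeg_le_length[of w] by auto
  then have "p ^ (i + 1) \<le> p ^ (j - length w)" using p by (intro power_decreasing) auto
  moreover have "cmod (shift_a.word_op p \<theta> w (dirac j) (i + 1)) \<le> 1"
    using norm_shift_word_le_1 p by blast
  ultimately have "p ^ (i + 1) * cmod (shift_a.word_op p \<theta> w (dirac j) (i + 1)) \<le> p ^ (j - length w)"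
    using p by (meson mult_left_le order_trans zero_le_power)
  then show ?thesis using p by (simp add: norm_mult norm_power)
qed (use p in simp)

text \<open>Far from the boundary, a word acts in the shift representation like the corresponding
  monomial of the torus representation, up to an error exponentially small in the distance.\<close>

definition torus_model :: "real \<Rightarrow> gen list \<Rightarrow> nat \<Rightarrow> nat \<Rightarrow> complex" where
  "torus_model \<theta> w j i = (if int i = int j + adeg w then word_phase \<theta> w * phase \<theta> (- int j * bdeg w) else 0)"

lemma shift_word_approx_Cons:
  assumes p: "0 \<le> p" "p \<le> 1" and "length w < j"
    and IH: "\<And>i. cmod (shift_a.word_op p \<theta> w (dirac j) i - torus_model \<theta> w j i) \<le> \<epsilon>"
  shows "cmod (shift_a.word_op p \<theta> (g # w) (dirac j) i - torus_model \<theta> (g # w) j i) \<le> \<epsilon> + p ^ (j - length w)"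
proof -
  let ?E = "\<lambda>w i. shift_a.word_op p \<theta> w (dirac j) i" and ?M = "\<lambda>w i. torus_model \<theta> w j i"
  have \<epsilon>: "0 \<le> \<epsilon>" using IH[of 0] norm_ge_zero order_trans by blast
  have p_pow: "0 \<le> p ^ (j - length w)" using p by simp
  show ?thesis
  proof (cases g)
    case GA
    show ?thesis
    proof (cases "i = 0")
      case True
      then show ?thesis
        using GA abs_adeg_le_length[of w] \<open>length w < j\<close> \<epsilon> p_pow by (auto simp: torus_model_def)
    next
      case False
      then have "cmod (?E (g # w) i - ?M (g # w) i) = cmod (?E w (i - 1) - ?M w (i - 1))"
        using GA by (auto simp: torus_model_def)
      then show ?thesis using IH[of "i - 1"] p_pow by linarith
    qed
  next
    case GAs
    have "?E (g # w) i - ?M (g # w) i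
        = (?E w (i + 1) - ?M w (i + 1)) - complex_of_real p ^ (i + 1) * ?E w (i + 1)"
      using GAs by (simp add: torus_model_def algebra_simps)
    then have "cmod (?E (g # w) i - ?M (g # w) i)
        \<le> cmod (?E w (i + 1) - ?M w (i + 1)) + cmod (complex_of_real p ^ (i + 1) * ?E w (i + 1))"
      by (simp only: norm_triangle_ineq4)
    then show ?thesis
      using IH[of "i + 1"] norm_shift_weight_defect[OF p, where \<theta>=\<theta> and i=i and w=w and j=j]
      by linarith
  next
    case GB
    then have "?E (g # w) i - ?M (g # w) i = phase \<theta> (- int i) * (?E w i - ?M w i)"
      by (auto simp: torus_model_def algebra_simps phase_add[symmetric] phase_mult_assoc)
    then show ?thesis using IH[of i] p_pow by (simp add: norm_mult)
  next
    case GBs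
    then have "?E (g # w) i - ?M (g # w) i = phase \<theta> (int i) * (?E w i - ?M w i)"
      by (auto simp: torus_model_def algebra_simps phase_add[symmetric] phase_mult_assoc)
    then show ?thesis using IH[of i] p_pow by (simp add: norm_mult)
  qed
qed

lemma shift_word_approx:
  assumes p: "0 \<le> p" "p \<le> 1" and "length w \<le> j"
  shows "cmod (shift_a.word_op p \<theta> w (dirac j) i - torus_model \<theta> w j i) \<le> real (length w) * p ^ (j - length w)"
  using \<open>length w \<le> j\<close>
proof (induction w arbitrary: i)
  case Nil
  then show ?case by (simp add: dirac_def torus_model_def)
next
  case (Cons g w)
  have step: "p ^ (j - length w) \<le> p ^ (j - length (g # w))"
    using p Cons.prems by (intro power_decreasing) auto
  then have "real (length w) * p ^ (j - length w) + p ^ (j - length w)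
      \<le> real (length (g # w)) * p ^ (j - length (g # w))"
    using mult_left_mono[OF step, of "real (length w)"] by (simp add: algebra_simps)
  moreover have "length w < j" using Cons.prems by simp
  then have "cmod (shift_a.word_op p \<theta> (g # w) (dirac j) i - torus_model \<theta> (g # w) j i)
      \<le> real (length w) * p ^ (j - length w) + p ^ (j - length w)"
    using Cons.IH by (intro shift_word_approx_Cons[OF p]) simp_all
  ultimately show ?case by linarith
qed

lemma shift_b_word_op: "shift_b.word_op q \<theta> w = shift_a.word_op q (- \<theta>) (map swap_gen w)"
  by (induction w) simp_all

lemma shift_b_word_supp: "shift_b.word_op q \<theta> w (dirac j) i \<noteq> 0 \<Longrightarrow> int i = int j + bdeg w"
  using shift_word_supp[of q "- \<theta>" "map swap_gen w"] by (simp add: shift_b_word_op)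

lemma shift_b_word_approx:
  assumes "0 \<le> q" "q \<le> 1" "length w \<le> j"
  shows "cmod (shift_b.word_op q \<theta> w (dirac j) i -
      (if int i = int j + bdeg w then word_phase \<theta> w * phase \<theta> (adeg w * (int j + bdeg w)) else 0))
    \<le> real (length w) * q ^ (j - length w)"
proof -
  have phase_eq: "word_phase (- \<theta>) (map swap_gen w) * phase (- \<theta>) (- int j * bdeg (map swap_gen w))
      = word_phase \<theta> w * phase \<theta> (adeg w * (int j + bdeg w))"
  proof -
    have "adeg w * (int j + bdeg w) = adeg w * bdeg w + int j * adeg w"
      by (simp add: algebra_simps)
    then show ?thesis by (simp add: word_phase_swap phase_uminus_angle mult.assoc phase_add[symmetric])
  qed
  show ?thesis
    using shift_word_approx[of q "map swap_gen w" j "- \<theta>" i, OF assms(1,2)] assms(3)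
    by (simp only: shift_b_word_op adeg_swap length_map torus_model_def phase_eq)
qed

section \<open>An index obstruction for banded matrices\<close>

lemma sum_indicator_shifted_pairs:
  fixes k :: int and L K :: nat
  assumes kL: "\<bar>k\<bar> \<le> int L" and LK: "L \<le> K"
  shows "(\<Sum>i\<in>{K-L..<K}. \<Sum>j\<in>{K..<K+L+1}. (if int j = int i + k then 1 else 0 :: complex)) = of_nat (nat k)"
proof (cases "k \<le> 0")
  case True
  then have "(\<Sum>i\<in>{K-L..<K}. \<Sum>j\<in>{K..<K+L+1}. (if int j = int i + k then 1 else 0 :: complex)) = 0"
    by (intro sum.neutral ballI) auto
  then show ?thesis using True by simp
next
  case False
  have inner: "(\<Sum>j\<in>{K..<K+L+1}. (if int j = int i + k then 1 else 0 :: complex))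
      = (if i + nat k \<in> {K..<K+L+1} then 1 else 0)" for i
  proof -
    have "(\<Sum>j\<in>{K..<K+L+1}. (if int j = int i + k then 1 else 0 :: complex))
        = (\<Sum>j\<in>{K..<K+L+1}. (if j = i + nat k then 1 else 0 :: complex))"
      using False by (intro sum.cong refl) auto
    then show ?thesis by (simp add: sum.delta')
  qed
  have "{i \<in> {K-L..<K}. i + nat k \<in> {K..<K+L+1}} = {K - nat k..<K}"
    using False kL LK by auto
  then have "(\<Sum>i\<in>{K-L..<K}. (if i + nat k \<in> {K..<K+L+1} then 1 else 0 :: complex)) = of_nat (nat k)"
    using False kL LK by (simp add: sum.inter_filter[symmetric])
  then show ?thesis unfolding inner .
qed

lemma norm_mult_diff_le:
  fixes a a0 g g0 :: complex
  assumes "cmod (a - a0) \<le> x" "cmod (g - g0) \<le> y" "cmod a0 \<le> B" "cmod g0 \<le> B" "y \<le> C"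
  shows "cmod (a * g - a0 * g0) \<le> x * (B + C) + B * y"
proof -
  have "cmod g \<le> cmod g0 + cmod (g - g0)" by (rule norm_triangle_sub)
  then have g: "cmod g \<le> B + C" using assms by linarith
  have x0: "0 \<le> x" and B0: "0 \<le> B" using assms(1,3) norm_ge_zero order_trans by blast+
  have "cmod ((a - a0) * g) \<le> x * (B + C)"
    unfolding norm_mult using assms(1) g x0 by (intro mult_mono) auto
  moreover have "cmod (a0 * (g - g0)) \<le> B * y"
    unfolding norm_mult using assms B0 by (intro mult_mono) auto
  moreover have "a * g - a0 * g0 = (a - a0) * g + a0 * (g - g0)" by (simp add: algebra_simps)
  ultimately show ?thesis by (metis add_mono norm_triangle_ineq order_trans)
qed

lemma norm_commutator_diff_le:
  fixes t s t' s' m m' n n' :: complex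
  assumes "cmod (t - m) \<le> e" "cmod (s - m') \<le> e" "cmod (s' - n') \<le> e" "cmod (t' - n) \<le> e"
    and "cmod m \<le> B" "cmod m' \<le> B" "cmod n \<le> B" "cmod n' \<le> B" and "e \<le> C"
  shows "cmod ((t * s - s' * t') - (m * m' - n' * n)) \<le> 2 * (e * (B + C) + B * e)"
proof -
  have eq: "(t * s - s' * t') - (m * m' - n' * n) = (t * s - m * m') - (s' * t' - n' * n)"
    by (simp add: algebra_simps)
  have "cmod ((t * s - s' * t') - (m * m' - n' * n)) \<le> cmod (t * s - m * m') + cmod (s' * t' - n' * n)"
    unfolding eq by (rule norm_triangle_ineq4)
  also have "\<dots> \<le> (e * (B + C) + B * e) + (e * (B + C) + B * e)"
    using assms by (intro add_mono norm_mult_diff_le) auto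
  finally show ?thesis by (simp only: mult_2)
qed

text \<open>With \<open>P\<close>, \<open>Q\<close> the coordinate projections onto \<open>[K-L, K)\<close> and \<open>[K, K+L]\<close>,
  \<open>cross_trace L K X Y = tr (P X Q Y) - tr (P Y Q X)\<close>.\<close>

definition cross_trace :: "nat \<Rightarrow> nat \<Rightarrow> (nat \<Rightarrow> nat \<Rightarrow> complex) \<Rightarrow> (nat \<Rightarrow> nat \<Rightarrow> complex) \<Rightarrow> complex" where
  "cross_trace L K X Y = (\<Sum>i\<in>{K-L..<K}. \<Sum>j\<in>{K..<K+L+1}. X i j * Y j i - Y i j * X j i)"

lemma cross_trace_banded_inverse:
  fixes T S :: "nat \<Rightarrow> nat \<Rightarrow> complex"
  assumes band: "\<And>i j. L < i - j \<or> L < j - i \<Longrightarrow> T i j = 0 \<and> S i j = 0"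
    and inv_TS: "\<And>i n. i + L < n \<Longrightarrow> (\<Sum>j<n. T i j * S j i) = 1"
    and inv_ST: "\<And>i n. i + L < n \<Longrightarrow> (\<Sum>j<n. S i j * T j i) = 1"
    and LK: "L \<le> K"
  shows "cross_trace L K T S = 0"
proof -
  let ?V = "{K..<K+L+1}"
  have split: "(\<Sum>j<K+L+1. f j) = (\<Sum>j<K. f j) + (\<Sum>j\<in>?V. f j)" for f :: "nat \<Rightarrow> complex"
    by (simp add: lessThan_atLeast0 sum.atLeastLessThan_concat)
  have "(\<Sum>j<K. T i j * S j i) + (\<Sum>j\<in>?V. T i j * S j i) = 1"
    and "(\<Sum>j<K. S i j * T j i) + (\<Sum>j\<in>?V. S i j * T j i) = 1" if "i < K" for i
    unfolding split[symmetric] using that by (simp_all only: inv_TS inv_ST add_less_mono1 less_add_one)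
  then have "(\<Sum>i<K. (\<Sum>j<K. T i j * S j i) + (\<Sum>j\<in>?V. T i j * S j i))
      = (\<Sum>i<K. (\<Sum>j<K. S i j * T j i) + (\<Sum>j\<in>?V. S i j * T j i))"
    by simp
  moreover have "(\<Sum>i<K. \<Sum>j<K. T i j * S j i) = (\<Sum>i<K. \<Sum>j<K. S i j * T j i)"
    by (subst sum.swap) (simp add: mult.commute)
  ultimately have "(\<Sum>i<K. \<Sum>j\<in>?V. T i j * S j i - S i j * T j i) = 0"
    by (simp add: sum.distrib sum_subtractf)
  moreover have "(\<Sum>j\<in>?V. T i j * S j i - S i j * T j i) = 0" if "i < K - L" for i
  proof (intro sum.neutral ballI)
    fix j assume "j \<in> ?V"
    then have "L < j - i" using that by auto
    then show "T i j * S j i - S i j * T j i = 0" using band[of i j] band[of j i] by auto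
  qed
  then have "(\<Sum>i<K. \<Sum>j\<in>?V. T i j * S j i - S i j * T j i)
      = (\<Sum>i\<in>{K-L..<K}. \<Sum>j\<in>?V. T i j * S j i - S i j * T j i)"
    by (simp add: lessThan_atLeast0 sum.atLeastLessThan_concat[of 0 "K - L" K, symmetric])
  ultimately show ?thesis by (simp add: cross_trace_def)
qed

lemma cross_trace_weighted_shift:
  fixes k :: int and \<alpha> \<beta> :: "nat \<Rightarrow> complex"
  assumes kL: "\<bar>k\<bar> \<le> int L" and LK: "L \<le> K"
    and \<alpha>\<beta>: "\<And>i j. int i = int j + k \<Longrightarrow> \<alpha> j * \<beta> i = 1"
  shows "cross_trace L K (\<lambda>i j. if int i = int j + k then \<alpha> j else 0)
      (\<lambda>i j. if int i = int j - k then \<beta> j else 0) = - of_int k"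
proof -
  let ?M = "\<lambda>i j. if int i = int j + k then \<alpha> j else 0"
  let ?M' = "\<lambda>i j. if int i = int j - k then \<beta> j else 0"
  have "?M i j * ?M' j i - ?M' i j * ?M j i
      = (if int j = int i + (-k) then 1 else 0) - (if int j = int i + k then 1 else 0)" for i j
    using \<alpha>\<beta>[of i j] \<alpha>\<beta>[of j i] by (auto simp: mult.commute)
  then have "cross_trace L K ?M ?M'
      = (\<Sum>i\<in>{K-L..<K}. \<Sum>j\<in>{K..<K+L+1}. (if int j = int i + (-k) then 1 else 0))
      - (\<Sum>i\<in>{K-L..<K}. \<Sum>j\<in>{K..<K+L+1}. (if int j = int i + k then 1 else 0))"
    unfolding cross_trace_def by (simp add: sum_subtractf)
  also have "\<dots> = of_nat (nat (-k)) - of_nat (nat k)"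
    using sum_indicator_shifted_pairs[of "-k" L K] sum_indicator_shifted_pairs[of k L K] kL LK by simp
  also have "\<dots> = - of_int k"
    by (cases "k \<le> 0") (simp_all add: of_nat_nat)
  finally show ?thesis .
qed

lemma norm_cross_trace_diff_le:
  assumes "\<And>i j. i \<in> {K-L..<K} \<Longrightarrow> j \<in> {K..<K+L+1} \<Longrightarrow>
      cmod ((T i j * S j i - S i j * T j i) - (M i j * M' j i - M' i j * M j i)) \<le> e"
    and "L \<le> K"
  shows "cmod (cross_trace L K T S - cross_trace L K M M') \<le> real L * real (L + 1) * e"
proof -
  have "cmod (cross_trace L K T S - cross_trace L K M M')
      = cmod (\<Sum>i\<in>{K-L..<K}. \<Sum>j\<in>{K..<K+L+1}.
          (T i j * S j i - S i j * T j i) - (M i j * M' j i - M' i j * M j i))"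
    by (simp add: cross_trace_def sum_subtractf)
  also have "\<dots> \<le> (\<Sum>i\<in>{K-L..<K}. \<Sum>j\<in>{K..<K+L+1}.
      cmod ((T i j * S j i - S i j * T j i) - (M i j * M' j i - M' i j * M j i)))"
    by (intro order_trans[OF norm_sum] sum_mono norm_sum)
  also have "\<dots> \<le> (\<Sum>i\<in>{K-L..<K}. \<Sum>j\<in>{K..<K+L+1}. e)"
    by (intro sum_mono assms(1))
  also have "\<dots> = real L * real (L + 1) * e"
    using assms(2) by simp
  finally show ?thesis .
qed

text \<open>A banded matrix with a banded two-sided inverse cannot be exponentially close,
  far out along the diagonal, to a weighted shift by \<open>k \<noteq> 0\<close>: the cross trace of the
  former is \<open>0\<close> and that of the latter is \<open>-k\<close>.\<close>

lemma banded_inverse_shift_index_zero: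
  fixes T S :: "nat \<Rightarrow> nat \<Rightarrow> complex" and k :: int and \<alpha> \<beta> :: "nat \<Rightarrow> complex"
  assumes band: "\<And>i j. L < i - j \<or> L < j - i \<Longrightarrow> T i j = 0 \<and> S i j = 0"
    and inv_TS: "\<And>i n. i + L < n \<Longrightarrow> (\<Sum>j<n. T i j * S j i) = 1"
    and inv_ST: "\<And>i n. i + L < n \<Longrightarrow> (\<Sum>j<n. S i j * T j i) = 1"
    and kL: "\<bar>k\<bar> \<le> int L"
    and \<alpha>\<beta>: "\<And>i j. int i = int j + k \<Longrightarrow> \<alpha> j * \<beta> i = 1"
    and approx_T: "\<And>i j. L \<le> j \<Longrightarrow> cmod (T i j - (if int i = int j + k then \<alpha> j else 0)) \<le> C * r ^ (j - L)"
    and approx_S: "\<And>i j. L \<le> j \<Longrightarrow> cmod (S i j - (if int i = int j - k then \<beta> j else 0)) \<le> C * r ^ (j - L)"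
    and \<alpha>: "\<And>j. cmod (\<alpha> j) \<le> B" and \<beta>: "\<And>j. cmod (\<beta> j) \<le> B"
    and r: "0 \<le> r" "r < 1" and C: "0 \<le> C"
  shows "k = 0"
proof -
  let ?M = "\<lambda>i j. if int i = int j + k then \<alpha> j else 0"
  let ?M' = "\<lambda>i j. if int i = int j - k then \<beta> j else 0"
  have B: "0 \<le> B" using \<alpha>[of 0] by (meson norm_ge_zero order_trans)
  define E where "E = 2 * (C * (B + C) + B * C)"
  define X where "X = real L * real (L + 1) * E"
  have X: "0 \<le> X" unfolding X_def E_def using B C by simp
  obtain n where n: "r ^ n < 1 / (X + 1)" using real_arch_pow_inv[of "1 / (X + 1)" r] X r by auto
  define K where "K = 2 * L + n"
  have LK: "L \<le> K" unfolding K_def by simp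
  have tail: "C * r ^ (j - L) \<le> C * r ^ n" if "K - L \<le> j" for j
    using that r C by (intro mult_left_mono power_decreasing) (auto simp: K_def)
  have "C * r ^ n \<le> C" using r C by (simp add: mult_left_le power_le_one)
  then have entry: "cmod ((T i j * S j i - S i j * T j i) - (?M i j * ?M' j i - ?M' i j * ?M j i))
      \<le> E * r ^ n" if "i \<in> {K-L..<K}" "j \<in> {K..<K+L+1}" for i j
  proof -
    have ij: "K - L \<le> j" "K - L \<le> i" "L \<le> j" "L \<le> i" using that by (auto simp: K_def)
    have M: "cmod (?M a b) \<le> B" "cmod (?M' a b) \<le> B" for a b using \<alpha> \<beta> B by auto
    have "cmod (T a b - ?M a b) \<le> C * r ^ n" "cmod (S a b - ?M' a b) \<le> C * r ^ n"
      if "a \<in> {i, j}" "b \<in> {i, j}" for a b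
      using order_trans[OF approx_T[of b a] tail[of b]] order_trans[OF approx_S[of b a] tail[of b]] that ij
      by auto
    then show ?thesis unfolding E_def
      by (intro order_trans[OF norm_commutator_diff_le[OF _ _ _ _ M M \<open>C * r ^ n \<le> C\<close>]])
        (auto simp: algebra_simps)
  qed
  have "cross_trace L K T S - cross_trace L K ?M ?M' = of_int k"
    using cross_trace_banded_inverse[OF band inv_TS inv_ST LK] cross_trace_weighted_shift[OF kL LK \<alpha>\<beta>]
    by simp
  then have "\<bar>real_of_int k\<bar> \<le> X * r ^ n"
    using norm_cross_trace_diff_le[where T=T and S=S and M="?M" and M'="?M'", OF entry LK] by (simp add: X_def mult.assoc)
  also have "\<dots> < 1"
  proof -
    have "X * r ^ n \<le> (X + 1) * r ^ n" using r by (simp add: algebra_simps)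
    also have "\<dots> < (X + 1) * (1 / (X + 1))" using n X by (intro mult_strict_left_mono) auto
    finally show ?thesis using X by simp
  qed
  finally show "k = 0" by linarith
qed

section \<open>Units have vanishing shift exponent\<close>

text \<open>A representation on \<open>\<ell>\<^sup>2(\<nat>)\<close> in which each word \<open>w\<close> acts, far along the diagonal, as
  the torus monomial of bidegree \<open>bideg w\<close>, realised as a weighted shift by \<open>\<pi> (bideg w)\<close>
  with phase factors \<open>\<psi>\<close>.\<close>

locale shift_rep = letter_rep G for G :: "gen \<Rightarrow> (nat \<Rightarrow> complex) \<Rightarrow> (nat \<Rightarrow> complex)" +
  fixes \<theta> r :: real and \<pi> :: "int \<times> int \<Rightarrow> int" and \<psi> :: "int \<times> int \<Rightarrow> nat \<Rightarrow> complex"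
  assumes r: "0 \<le> r" "r < 1"
    and \<pi>_uminus: "\<pi> (- b) = - \<pi> b"
    and abs_\<pi>_bideg_le: "\<bar>\<pi> (bideg w)\<bar> \<le> int (length w)"
    and word_op_supp: "word_op w (dirac j) i \<noteq> 0 \<Longrightarrow> int i = int j + \<pi> (bideg w)"
    and word_op_approx: "length w \<le> j \<Longrightarrow>
      cmod (word_op w (dirac j) i - (if int i = int j + \<pi> (bideg w) then word_phase \<theta> w * \<psi> (bideg w) j else 0))
        \<le> real (length w) * r ^ (j - length w)"
    and norm_\<psi>: "cmod (\<psi> b j) = 1"
    and \<psi>_pair: "int i = int j + \<pi> b \<Longrightarrow> \<psi> b j * \<psi> (- b) i = phase \<theta> (fst b * snd b)"
begin

lemma rep_entry_band:
  assumes "\<And>w. w \<in> supp f \<Longrightarrow> length w \<le> L" and "L < i - j \<or> L < j - i"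
  shows "rep f (dirac j) i = 0"
  unfolding rep_def
proof (intro sum.neutral ballI)
  fix w assume w: "w \<in> supp f"
  show "f w * word_op w (dirac j) i = 0"
  proof (rule ccontr)
    assume "f w * word_op w (dirac j) i \<noteq> 0"
    then have "int i = int j + \<pi> (bideg w)" using word_op_supp by auto
    then show False using abs_\<pi>_bideg_le[of w] assms(1)[OF w] assms(2) by auto
  qed
qed

lemma rep_entry_approx:
  assumes f: "fin f" and L: "\<And>w. w \<in> supp f \<Longrightarrow> length w \<le> L" and "L \<le> j"
    and mono: "\<And>b. b \<noteq> m \<Longrightarrow> torus_coeff \<theta> f b = 0"
  shows "cmod (rep f (dirac j) i - (if int i = int j + \<pi> m then torus_coeff \<theta> f m * \<psi> m j else 0))
    \<le> real L * (\<Sum>w\<in>supp f. cmod (f w)) * r ^ (j - L)"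
proof -
  let ?M = "\<lambda>w. if int i = int j + \<pi> (bideg w) then word_phase \<theta> w * \<psi> (bideg w) j else 0"
  have "(\<Sum>w\<in>supp f. f w * ?M w)
      = (\<Sum>w\<in>supp f. f w * word_phase \<theta> w * (\<lambda>b. if int i = int j + \<pi> b then \<psi> b j else 0) (bideg w))"
    by (intro sum.cong refl) simp
  also have "\<dots> = (\<Sum>b\<in>bideg ` supp f. torus_coeff \<theta> f b * (if int i = int j + \<pi> b then \<psi> b j else 0))"
    by (rule sum_supp_by_bideg[OF f])
  also have "\<dots> = (\<Sum>b\<in>bideg ` supp f.
      if b = m then torus_coeff \<theta> f m * (if int i = int j + \<pi> m then \<psi> m j else 0) else 0)"
    using mono by (intro sum.cong refl) auto
  also have "\<dots> = (if int i = int j + \<pi> m then torus_coeff \<theta> f m * \<psi> m j else 0)"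
    using f torus_coeff_eq_0[of m f \<theta>] by (simp add: fin_iff_finite_supp sum.delta)
  finally have model: "(\<Sum>w\<in>supp f. f w * ?M w) = \<dots>" .
  have "cmod (f w * (word_op w (dirac j) i - ?M w)) \<le> cmod (f w) * (real L * r ^ (j - L))"
    if w: "w \<in> supp f" for w
  proof -
    have "real (length w) * r ^ (j - length w) \<le> real L * r ^ (j - L)"
      using L[OF w] \<open>L \<le> j\<close> r by (intro mult_mono power_decreasing) auto
    then show ?thesis
      using word_op_approx[of w j i] L[OF w] \<open>L \<le> j\<close> unfolding norm_mult
      by (intro mult_left_mono) auto
  qed
  then have "cmod (\<Sum>w\<in>supp f. f w * (word_op w (dirac j) i - ?M w))
      \<le> (\<Sum>w\<in>supp f. cmod (f w) * (real L * r ^ (j - L)))"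
    by (intro order_trans[OF norm_sum] sum_mono)
  also have "\<dots> = real L * (\<Sum>w\<in>supp f. cmod (f w)) * r ^ (j - L)"
    by (simp add: sum_distrib_left sum_distrib_right mult_ac)
  also have "(\<Sum>w\<in>supp f. f w * (word_op w (dirac j) i - ?M w))
      = rep f (dirac j) i - (if int i = int j + \<pi> m then torus_coeff \<theta> f m * \<psi> m j else 0)"
    unfolding model[symmetric] rep_def by (simp add: sum_subtractf right_diff_distrib)
  finally show ?thesis .
qed

lemma rep_inverse_entries:
  assumes inv: "\<And>v. rep f (rep g v) = v"
    and band: "\<And>x j. L < x - j \<or> L < j - x \<Longrightarrow> rep g (dirac j) x = 0"
    and "i + L < n"
  shows "(\<Sum>j<n. rep f (dirac j) i * rep g (dirac i) j) = 1"
proof -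
  have "rep g (dirac i) = (\<lambda>x. \<Sum>j<n. rep g (dirac i) j * dirac j x)"
  proof (rule ext)
    fix x
    have "(\<Sum>j<n. rep g (dirac i) j * dirac j x) = (if x < n then rep g (dirac i) x else 0)"
      by (simp add: dirac_def if_distrib sum.delta cong: if_cong)
    also have "\<dots> = rep g (dirac i) x" using band[of x i] \<open>i + L < n\<close> by auto
    finally show "rep g (dirac i) x = (\<Sum>j<n. rep g (dirac i) j * dirac j x)" ..
  qed
  then have "rep f (rep g (dirac i)) = (\<lambda>x. \<Sum>j<n. rep g (dirac i) j * rep f (dirac j) x)"
    using rep_sum[of "{..<n}" f "\<lambda>j. rep g (dirac i) j" dirac] by simp
  then have "(\<Sum>j<n. rep g (dirac i) j * rep f (dirac j) i) = dirac i i"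
    using inv by metis
  then show ?thesis by (simp add: dirac_def mult.commute)
qed

theorem unit_shift_exponent_zero:
  assumes J: "fin J" and V: "fin V"
    and inv_JV: "\<And>v. rep J (rep V v) = v" and inv_VJ: "\<And>v. rep V (rep J v) = v"
    and m: "m \<in> bideg ` supp J"
    and J_mono: "\<And>b. b \<noteq> m \<Longrightarrow> torus_coeff \<theta> J b = 0"
    and V_mono: "\<And>b. b \<noteq> - m \<Longrightarrow> torus_coeff \<theta> V b = 0"
    and unit: "torus_coeff \<theta> J m * phase \<theta> (fst m * snd m) * torus_coeff \<theta> V (- m) = 1"
  shows "\<pi> m = 0"
proof -
  define c c' where "c = torus_coeff \<theta> J m" and "c' = torus_coeff \<theta> V (- m)"
  define L where "L = (\<Sum>w\<in>supp J \<union> supp V. length w)"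
  define C where "C = real L * ((\<Sum>w\<in>supp J. cmod (J w)) + (\<Sum>w\<in>supp V. cmod (V w)))"
  have fin_supp: "finite (supp J)" "finite (supp V)" using J V by (simp_all add: fin_iff_finite_supp)
  have L: "length w \<le> L" if "w \<in> supp J \<union> supp V" for w
    unfolding L_def using that fin_supp by (intro member_le_sum) auto
  then have LJ: "\<And>w. w \<in> supp J \<Longrightarrow> length w \<le> L" and LV: "\<And>w. w \<in> supp V \<Longrightarrow> length w \<le> L"
    by auto
  obtain w where w: "w \<in> supp J" "m = bideg w" using m by blast
  have kL: "\<bar>\<pi> m\<bar> \<le> int L"
    using abs_\<pi>_bideg_le[of w] LJ[OF w(1)] w(2) by (metis of_nat_le_iff order_trans)
  have C: "real L * (\<Sum>w\<in>supp J. cmod (J w)) \<le> C" "real L * (\<Sum>w\<in>supp V. cmod (V w)) \<le> C" "0 \<le> C"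
    unfolding C_def by (auto intro!: mult_left_mono mult_nonneg_nonneg add_nonneg_nonneg sum_nonneg)
  show ?thesis
  proof (rule banded_inverse_shift_index_zero[where T="\<lambda>i j. rep J (dirac j) i" and S="\<lambda>i j. rep V (dirac j) i"
        and \<alpha>="\<lambda>j. c * \<psi> m j" and \<beta>="\<lambda>j. c' * \<psi> (- m) j" and B="cmod c + cmod c'" and C=C])
    show "rep J (dirac j) i = 0 \<and> rep V (dirac j) i = 0" if "L < i - j \<or> L < j - i" for i j
      using rep_entry_band[OF LJ that] rep_entry_band[OF LV that] by simp
    show "(\<Sum>j<n. rep J (dirac j) i * rep V (dirac i) j) = 1" if "i + L < n" for i n
      using rep_inverse_entries[OF inv_JV _ that] rep_entry_band[OF LV] by blast
    show "(\<Sum>j<n. rep V (dirac j) i * rep J (dirac i) j) = 1" if "i + L < n" for i n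
      using rep_inverse_entries[OF inv_VJ _ that] rep_entry_band[OF LJ] by blast
    show "c * \<psi> m j * (c' * \<psi> (- m) i) = 1" if "int i = int j + \<pi> m" for i j
    proof -
      have "c * \<psi> m j * (c' * \<psi> (- m) i) = c * (\<psi> m j * \<psi> (- m) i) * c'"
        by (simp add: mult_ac)
      then show ?thesis using \<psi>_pair[OF that] unit by (simp add: c_def c'_def)
    qed
    show "cmod (rep J (dirac j) i - (if int i = int j + \<pi> m then c * \<psi> m j else 0)) \<le> C * r ^ (j - L)"
      if "L \<le> j" for i j
      unfolding c_def
      by (rule order_trans[OF rep_entry_approx[where m=m, OF J LJ that J_mono] mult_right_mono[OF C(1)]])
        (use r(1) in auto)
    show "cmod (rep V (dirac j) i - (if int i = int j - \<pi> m then c' * \<psi> (- m) j else 0)) \<le> C * r ^ (j - L)"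
      if "L \<le> j" for i j
      unfolding c'_def
      by (rule order_trans[OF rep_entry_approx[where m="- m", OF V LV that V_mono,
            unfolded \<pi>_uminus add_uminus_conv_diff] mult_right_mono[OF C(2)]])
        (use r(1) in auto)
  qed (use kL r C in \<open>simp_all add: norm_mult norm_\<psi>\<close>)
qed

end

lemma shift_rep_a:
  assumes "0 \<le> p" "p < 1"
  shows "shift_rep (shift_gen p \<theta>) \<theta> p fst (\<lambda>b j. phase \<theta> (- int j * snd b))"
proof unfold_locales
  show "shift_a.word_op p \<theta> w (dirac j) i \<noteq> 0 \<Longrightarrow> int i = int j + fst (bideg w)" for w j i
    using shift_word_supp by (simp add: bideg_def)
  show "\<bar>fst (bideg w)\<bar> \<le> int (length w)" for w
    using abs_adeg_le_length by (simp add: bideg_def)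
  show "cmod (shift_a.word_op p \<theta> w (dirac j) i -
      (if int i = int j + fst (bideg w) then word_phase \<theta> w * phase \<theta> (- int j * snd (bideg w)) else 0))
      \<le> real (length w) * p ^ (j - length w)" if "length w \<le> j" for w j i
    using shift_word_approx[OF assms(1) less_imp_le[OF assms(2)] that, of \<theta> i]
    unfolding torus_model_def bideg_def fst_conv snd_conv .
  show "phase \<theta> (- int j * snd b) * phase \<theta> (- int i * snd (- b)) = phase \<theta> (fst b * snd b)"
    if "int i = int j + fst b" for i j b
    using that by (simp add: phase_add[symmetric] algebra_simps)
qed (use assms in \<open>simp_all add: shift_a.letter_rep_axioms\<close>)

lemma shift_rep_b:
  assumes "0 \<le> q" "q < 1"
  shows "shift_rep (\<lambda>g. shift_gen q (- \<theta>) (swap_gen g)) \<theta> q snd (\<lambda>b j. phase \<theta> (fst b * (int j + snd b)))"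
proof unfold_locales
  show "shift_b.word_op q \<theta> w (dirac j) i \<noteq> 0 \<Longrightarrow> int i = int j + snd (bideg w)" for w j i
    using shift_b_word_supp by (simp add: bideg_def)
  show "\<bar>snd (bideg w)\<bar> \<le> int (length w)" for w
    using abs_bdeg_le_length by (simp add: bideg_def)
  show "cmod (shift_b.word_op q \<theta> w (dirac j) i -
      (if int i = int j + snd (bideg w) then word_phase \<theta> w * phase \<theta> (fst (bideg w) * (int j + snd (bideg w)))
       else 0)) \<le> real (length w) * q ^ (j - length w)" if "length w \<le> j" for w j i
    unfolding bideg_def fst_conv snd_conv using assms that by (intro shift_b_word_approx) auto
  show "phase \<theta> (fst b * (int j + snd b)) * phase \<theta> (fst (- b) * (int i + snd (- b))) = phase \<theta> (fst b * snd b)"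
    if "int i = int j + snd b" for i j b
    using that by (simp add: phase_add[symmetric] algebra_simps)
qed (use assms in \<open>simp_all add: shift_b.letter_rep_axioms\<close>)

section \<open>Non-cleftness\<close>

lemma sum_basis:
  fixes k N :: nat
  assumes "k < N"
  shows "(\<Sum>i<N. (if i = k then 1 else 0) * F i) = (F k :: complex)"
proof -
  have "(\<Sum>i<N. (if i = k then 1 else 0) * F i) = (\<Sum>i<N. if i = k then F i else 0)"
    by (intro sum.cong) auto
  also have "\<dots> = F k"
    using assms by simp
  finally show ?thesis .
qed

lemma conv_basis: "k < N \<Longrightarrow> conv N F G (\<lambda>i. if i = k then 1 else 0) = fa_mult (F k) (G k)"
proof (rule ext)
  fix w assume "k < N"
  have "(\<Sum>j<N. H_coprod h i j * fa_mult (F i) (G j) w) = h i * fa_mult (F i) (G i) w" if "i < N" for h i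
  proof -
    have "(\<Sum>j<N. H_coprod h i j * fa_mult (F i) (G j) w)
        = (\<Sum>j<N. if j = i then h i * fa_mult (F i) (G i) w else 0)"
      by (intro sum.cong) (auto simp: H_coprod_def)
    then show ?thesis using that by (simp add: sum.delta)
  qed
  then show "conv N F G (\<lambda>i. if i = k then 1 else 0) w = fa_mult (F k) (G k) w"
    unfolding conv_def using sum_basis[OF \<open>k < N\<close>] by simp
qed

lemma H_counit_basis: "k < N \<Longrightarrow> H_counit N (\<lambda>i. if i = k then 1 else 0) = 1"
  by (simp add: H_counit_def)

lemma lin_ext_basis: "k < N \<Longrightarrow> lin_ext N J (\<lambda>i. if i = k then 1 else 0) = J k"
  unfolding lin_ext_def by (rule ext) (rule sum_basis)

lemma H_coprod_basis: "k < N \<Longrightarrow> (\<lambda>w. \<Sum>i<N. H_coprod (\<lambda>i. if i = k then 1 else 0) i k * J i w) = J k"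
proof (rule ext)
  fix w assume "k < N"
  have "H_coprod (\<lambda>i. if i = k then 1 else 0) i k = (if i = k then 1 else 0)" for i
    by (simp add: H_coprod_def)
  then show "(\<Sum>i<N. H_coprod (\<lambda>i. if i = k then 1 else 0) i k * J i w) = J k w"
    using sum_basis[OF \<open>k < N\<close>] by simp
qed

text \<open>Evaluating the convolution identities and colinearity at the basis element \<open>u\<close>
  of \<open>\<O>(\<int>/N\<int>)\<close> shows that \<open>j(u)\<close> is a unit of degree \<open>1\<close>.\<close>

lemma cleft_degree_one_unit:
  assumes "cleft N I" and N: "1 < N"
  obtains J V where "fin J" "fin V" "fa_diff (fa_mult J V) fa_one \<in> I" "fa_diff (fa_mult V J) fa_one \<in> I"
    "fa_diff (coact N J 1) J \<in> I"
proof -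
  obtain j j' where fin_j: "\<forall>k<N. fin (j k)" and colin: "colinear N I j" and fin_j': "\<forall>k<N. fin (j' k)"
    and inv: "\<forall>h. qeq I (conv N j j' h) (fa_smult (H_counit N h) fa_one) \<and>
                  qeq I (conv N j' j h) (fa_smult (H_counit N h) fa_one)"
    using \<open>cleft N I\<close> unfolding cleft_def by blast
  define u :: "nat \<Rightarrow> complex" where "u = (\<lambda>i. if i = 1 then 1 else 0)"
  have "fa_smult (H_counit N u) fa_one = fa_one"
    using N by (simp add: u_def H_counit_basis fa_smult_def)
  then have "fa_diff (fa_mult (j 1) (j' 1)) fa_one \<in> I" "fa_diff (fa_mult (j' 1) (j 1)) fa_one \<in> I"
    using inv[rule_format, of u] N unfolding qeq_def u_def by (simp_all add: conv_basis)
  moreover have "qeq I (coact N (lin_ext N j u) 1) (\<lambda>w. \<Sum>i<N. H_coprod u i 1 * j i w)"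
    using colin N unfolding colinear_def by blast
  then have "fa_diff (coact N (j 1) 1) (j 1) \<in> I"
    unfolding qeq_def u_def lin_ext_basis[OF N] H_coprod_basis[OF N] .
  moreover have "fin (j 1)" "fin (j' 1)" using fin_j fin_j' N by auto
  ultimately show ?thesis using that by blast
qed

lemma torus_coeff_degree:
  assumes J: "fin J" and k: "fa_diff (coact N J k) J \<in> S3_ideal p q \<theta>" and m: "torus_coeff \<theta> J m \<noteq> 0"
  shows "(fst m + snd m) mod int N = int k"
proof -
  have fin_coact: "fin (coact N J k)" using J by (rule fin_subset) (auto simp: supp_def coact_def)
  then have "torus.rep \<theta> (coact N J k) = torus.rep \<theta> J"
    using torus_rep_vanishes[OF k] J by (intro torus.rep_eq_if_diff_vanishes) auto
  then have "torus_coeff \<theta> (coact N J k) = torus_coeff \<theta> J"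
    by (simp only: torus_rep_dirac[OF fin_coact, symmetric] torus_rep_dirac[OF J, symmetric])
  with m have "m \<in> bideg ` supp (coact N J k)" using torus_coeff_eq_0 by metis
  then obtain w where "coact N J k w \<noteq> 0" "m = bideg w" by (auto simp: supp_def)
  then show ?thesis by (simp add: coact_def bideg_def wdeg_eq_adeg_add_bdeg split: if_splits)
qed

theorem S3_not_cleft:
  assumes "0 \<le> p" "p < 1" "0 \<le> q" "q < 1" and N: "2 \<le> N"
  shows "\<not> cleft N (S3_ideal p q \<theta>)"
proof
  assume "cleft N (S3_ideal p q \<theta>)"
  moreover have "1 < N" using N by simp
  ultimately obtain J V where J: "fin J" and V: "fin V"
    and JV: "fa_diff (fa_mult J V) fa_one \<in> S3_ideal p q \<theta>"
    and VJ: "fa_diff (fa_mult V J) fa_one \<in> S3_ideal p q \<theta>"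
    and deg: "fa_diff (coact N J 1) J \<in> S3_ideal p q \<theta>"
    by (rule cleft_degree_one_unit)
  have JV_torus: "torus.rep \<theta> (fa_mult J V) = torus.rep \<theta> fa_one"
    using torus_rep_vanishes[OF JV] J V by (intro torus.rep_eq_if_diff_vanishes) auto
  obtain m where m: "m \<in> bideg ` supp J" and J_mono: "\<And>b. b \<noteq> m \<Longrightarrow> torus_coeff \<theta> J b = 0"
    and V_mono: "\<And>b. b \<noteq> - m \<Longrightarrow> torus_coeff \<theta> V b = 0"
    and unit: "torus_coeff \<theta> J m * phase \<theta> (fst m * snd m) * torus_coeff \<theta> V (- m) = 1"
    using torus_unit_monomial[OF J V JV_torus] by blast
  have "torus_coeff \<theta> J m \<noteq> 0" using unit by auto
  then have "(fst m + snd m) mod int N = 1" using torus_coeff_degree[OF J deg] by simp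
  have inverse_a: "shift_a.rep p \<theta> J (shift_a.rep p \<theta> V v) = v" "shift_a.rep p \<theta> V (shift_a.rep p \<theta> J v) = v"
    for v
    using shift_a_rep_vanishes[OF JV] shift_a_rep_vanishes[OF VJ] J V
    by (auto intro!: shift_a.rep_inverse shift_a.rep_eq_if_diff_vanishes)
  have inverse_b: "shift_b.rep q \<theta> J (shift_b.rep q \<theta> V v) = v" "shift_b.rep q \<theta> V (shift_b.rep q \<theta> J v) = v"
    for v
    using shift_b_rep_vanishes[OF JV] shift_b_rep_vanishes[OF VJ] J V
    by (auto intro!: shift_b.rep_inverse shift_b.rep_eq_if_diff_vanishes)
  have "fst m = 0"
    using shift_rep.unit_shift_exponent_zero[OF shift_rep_a J V inverse_a m J_mono V_mono unit] assms
    by simp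
  moreover have "snd m = 0"
    using shift_rep.unit_shift_exponent_zero[OF shift_rep_b J V inverse_b m J_mono V_mono unit] assms
    by simp
  ultimately show False using \<open>(fst m + snd m) mod int N = 1\<close> N by simp
qed

theorem mainTheorem8:
  fixes p q \<theta> :: real and N :: nat
  assumes "0 \<le> p" "p < 1" "0 \<le> q" "q < 1"
    and "0 < \<theta>" "\<theta> < 1" "\<theta> \<notin> \<rat>"
    and "2 \<le> N"
  shows "coaction_descends N (S3_ideal p q \<theta>) \<and> \<not> cleft N (S3_ideal p q \<theta>)"
  using assms coaction_descends_S3 S3_not_cleft by simp

end
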